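(* Let $(U,A)$ and $(V,A)$ be left Hopf algebroids over the same $\Bbbk$-algebra $A$, let $\pi\colon U\to V$ be a surjective morphism of left Hopf algebroids, and let $B$ be its left Hopf kernel. Then: (i) $B$ is an $A$-subring of $U$ with unit map $s_U\colon A\to B$, and its elements commute with $t_U(A)$, i.e. $b\triangleleft a=t_U(a)\,b=b\,t_U(a)=a\blacktriangleright b$ for all $b\in B$, $a\in A$; (ii) the assignment $u\otimes b\mapsto u\rightharpoonup b:=u_+\,b\,u_-$ is a well-defined left $U$-action $U\otimes B\to B$ (landing in $B$), which descends to ${}_\blacktriangleright U_\blacktriangleleft\otimes_{A^e}{}_\triangleright B_\blacktriangleleft\to B$ and satisfies $u\rightharpoonup1_B=s_U(\varepsilon_U(u))$ and $u\rightharpoonup(bb')=(u_{(1)}\rightharpoonup b)(u_{(2)}\rightharpoonup b')$ for all $u\in U$, $b,b'\in B$; thus $B$ is a left $U$-module algebra.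
   Context: A left bialgebroid $(U,A,\Delta,\varepsilon,s,t)$ over a $\Bbbk$-algebra $A$: $\Bbbk$-algebra $U$ with algebra map $s$ and algebra anti-map $t$ from $A$ with commuting images, four commuting $A$-actions $a\blacktriangleright b\triangleright u\triangleleft c\blacktriangleleft d:=t(c)s(b)\,u\,s(d)t(a)$, a coassociative counital unital multiplicative comultiplication $\Delta\colon U\to U_\triangleleft\otimes_A{}_\triangleright U$, $u\mapsto u_{(1)}\otimes u_{(2)}$, landing in the Takeuchi product (where $a\blacktriangleright u_{(1)}\otimes u_{(2)}=u_{(1)}\otimes u_{(2)}\blacktriangleleft a$), with $\Delta(a\blacktriangleright b\triangleright u\triangleleft c\blacktriangleleft d)=(b\triangleright u_{(1)}\blacktriangleleft d)\otimes(a\blacktriangleright u_{(2)}\triangleleft c)$, and counit $\varepsilon\colon U\to A$ with $\varepsilon(b\triangleright u\triangleleft c)=b\varepsilon(u)c$, $\varepsilon(a\blacktriangleright u)=\varepsilon(u\blacktriangleleft a)$, $\varepsilon(uv)=\varepsilon(u\blacktriangleleft\varepsilon(v))$, $s(\varepsilon(u_{(1)}))u_{(2)}=u=t(\varepsilon(u_{(2)}))u_{(1)}$. It is a left Hopf algebroid if $\beta\colon{}_\blacktriangleright U\otimes_{A^{op}}U_\triangleleft\to U_\triangleleft\otimes_A{}_\triangleright U$, $u\otimes v\mapsto u_{(1)}\otimes u_{(2)}v$ is bijective (the domain being $U\otimes U$ modulo $u\,t(a)\otimes v-u\otimes t(a)v$); write $u_+\otimes u_-:=\beta^{-1}(u\otimes1)$.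 A morphism is an algebra map commuting with $\Delta,\varepsilon,s,t$. The left Hopf kernel of surjective $\pi$ is $B=\{u\in U: u_{(1)}\otimes_A\pi(u_{(2)})=u\otimes_A1_V\}$. *)

theory Defs
  imports Main
begin

text \<open>An element of a tensor product is represented by a finite list of elementary
tensors (a formal sum). Two representatives are equal in the tensor product iff the
difference of their formal sums (as integer-valued finitely supported functions)
lies in the additive subgroup generated by the defining relations of the tensor
product (biadditivity and balancing).\<close>

definition delta :: "'p \<Rightarrow> 'p \<Rightarrow> int" where
  "delta p = (\<lambda>q. if q = p then 1 else 0)"

definition fdiff :: "'p list \<Rightarrow> 'p list \<Rightarrow> 'p \<Rightarrow> int" where
  "fdiff xs ys = (\<lambda>q. int (count_list xs q) - int (count_list ys q))"

inductive_set zspan :: "('p \<Rightarrow> int) set \<Rightarrow> ('p \<Rightarrow> int) set" for G where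
  zspan_zero: "(\<lambda>_. 0) \<in> zspan G"
| zspan_gen: "g \<in> G \<Longrightarrow> g \<in> zspan G"
| zspan_add: "f \<in> zspan G \<Longrightarrow> g \<in> zspan G \<Longrightarrow> (\<lambda>q. f q + g q) \<in> zspan G"
| zspan_neg: "f \<in> zspan G \<Longrightarrow> (\<lambda>q. - f q) \<in> zspan G"

text \<open>Relations of \<open>M_A \<otimes>_A {}_A N\<close>, right action \<open>r\<close> on M, left action \<open>l\<close> on N.\<close>
definition tens_gens :: "('m::ab_group_add \<Rightarrow> 'a \<Rightarrow> 'm) \<Rightarrow> ('a \<Rightarrow> 'n::ab_group_add \<Rightarrow> 'n)
    \<Rightarrow> ('m \<times> 'n \<Rightarrow> int) set" where
  "tens_gens r l =
     {(\<lambda>q. delta (m + m', n) q - delta (m, n) q - delta (m', n) q) | m m' n. True}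
   \<union> {(\<lambda>q. delta (m, n + n') q - delta (m, n) q - delta (m, n') q) | m n n'. True}
   \<union> {(\<lambda>q. delta (r m a, n) q - delta (m, l a n) q) | m a n. True}"

definition teq :: "('m::ab_group_add \<Rightarrow> 'a \<Rightarrow> 'm) \<Rightarrow> ('a \<Rightarrow> 'n::ab_group_add \<Rightarrow> 'n)
    \<Rightarrow> ('m \<times> 'n) list \<Rightarrow> ('m \<times> 'n) list \<Rightarrow> bool" where
  "teq r l xs ys \<longleftrightarrow> fdiff xs ys \<in> zspan (tens_gens r l)"

text \<open>Relations of a triple tensor product \<open>M_A \<otimes>_A {}_A N_A \<otimes>_A {}_A P\<close>.\<close>
definition tens3_gens :: "('m::ab_group_add \<Rightarrow> 'a \<Rightarrow> 'm) \<Rightarrow> ('a \<Rightarrow> 'n::ab_group_add \<Rightarrow> 'n)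
    \<Rightarrow> ('n \<Rightarrow> 'a \<Rightarrow> 'n) \<Rightarrow> ('a \<Rightarrow> 'p::ab_group_add \<Rightarrow> 'p) \<Rightarrow> ('m \<times> 'n \<times> 'p \<Rightarrow> int) set" where
  "tens3_gens r1 l1 r2 l2 =
     {(\<lambda>q. delta (m + m', n, p) q - delta (m, n, p) q - delta (m', n, p) q) | m m' n p. True}
   \<union> {(\<lambda>q. delta (m, n + n', p) q - delta (m, n, p) q - delta (m, n', p) q) | m n n' p. True}
   \<union> {(\<lambda>q. delta (m, n, p + p') q - delta (m, n, p) q - delta (m, n, p') q) | m n p p'. True}
   \<union> {(\<lambda>q. delta (r1 m a, n, p) q - delta (m, l1 a n, p) q) | m a n p. True}
   \<union> {(\<lambda>q. delta (m, r2 n a, p) q - delta (m, n, l2 a p) q) | m a n p. True}"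

definition teq3 :: "('m::ab_group_add \<Rightarrow> 'a \<Rightarrow> 'm) \<Rightarrow> ('a \<Rightarrow> 'n::ab_group_add \<Rightarrow> 'n)
    \<Rightarrow> ('n \<Rightarrow> 'a \<Rightarrow> 'n) \<Rightarrow> ('a \<Rightarrow> 'p::ab_group_add \<Rightarrow> 'p)
    \<Rightarrow> ('m \<times> 'n \<times> 'p) list \<Rightarrow> ('m \<times> 'n \<times> 'p) list \<Rightarrow> bool" where
  "teq3 r1 l1 r2 l2 xs ys \<longleftrightarrow> fdiff xs ys \<in> zspan (tens3_gens r1 l1 r2 l2)"

text \<open>\<open>U_\<triangleleft> \<otimes>_A {}_\<triangleright>W\<close> where \<open>u \<triangleleft> a = t a * u\<close> and \<open>a \<triangleright> w = s' a * w\<close>.\<close>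
definition teqA :: "('a \<Rightarrow> 'u::ring) \<Rightarrow> ('a \<Rightarrow> 'w::ring) \<Rightarrow> ('u \<times> 'w) list \<Rightarrow> ('u \<times> 'w) list \<Rightarrow> bool" where
  "teqA t s' = teq (\<lambda>u a. t a * u) (\<lambda>a w. s' a * w)"

text \<open>\<open>U_\<triangleleft> \<otimes>_A {}_\<triangleright>U_\<triangleleft> \<otimes>_A {}_\<triangleright>U\<close>.\<close>
definition teqA3 :: "('a \<Rightarrow> 'u::ring) \<Rightarrow> ('a \<Rightarrow> 'u) \<Rightarrow> ('u \<times> 'u \<times> 'u) list \<Rightarrow> ('u \<times> 'u \<times> 'u) list \<Rightarrow> bool" where
  "teqA3 s t = teq3 (\<lambda>u a. t a * u) (\<lambda>a u. s a * u) (\<lambda>u a. t a * u) (\<lambda>a u. s a * u)"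

text \<open>\<open>{}_\<blacktriangleright>U \<otimes>_{A^op} U_\<triangleleft>\<close>: relation \<open>u t(a) \<otimes> v = u \<otimes> t(a) v\<close>.\<close>
definition teqAop :: "('a \<Rightarrow> 'u::ring) \<Rightarrow> ('u \<times> 'u) list \<Rightarrow> ('u \<times> 'u) list \<Rightarrow> bool" where
  "teqAop t = teq (\<lambda>u a. u * t a) (\<lambda>a v. t a * v)"

text \<open>The k-algebra \<open>A\<close> is given by the ring \<open>'a\<close> and a ring map \<open>\<iota>\<close> from the commutative
ring \<open>'k\<close> into the centre of \<open>'a\<close>. Rings are unital but not required to be nontrivial.
The k-algebra structure of \<open>U\<close> is \<open>\<lambda> u = s(\<iota> \<lambda>) u\<close> (forced since \<open>s\<close> is a k-algebra map).
The comultiplication is given by a representative \<open>\<Delta> u\<close> (a list of pairs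
\<open>u\<^sub>(\<^sub>1\<^sub>) \<otimes> u\<^sub>(\<^sub>2\<^sub>)\<close>) of an element of \<open>U_\<triangleleft> \<otimes>_A {}_\<triangleright>U\<close>.\<close>

definition k_algebra :: "('k::{comm_ring,monoid_mult} \<Rightarrow> 'a::{ring,monoid_mult}) \<Rightarrow> bool" where
  "k_algebra \<iota> \<longleftrightarrow> (\<forall>c d. \<iota> (c + d) = \<iota> c + \<iota> d) \<and> (\<forall>c d. \<iota> (c * d) = \<iota> c * \<iota> d)
     \<and> \<iota> 1 = 1 \<and> (\<forall>c x. \<iota> c * x = x * \<iota> c)"

definition left_bialgebroid ::
  "('k::{comm_ring,monoid_mult} \<Rightarrow> 'a::{ring,monoid_mult}) \<Rightarrow> ('a \<Rightarrow> 'u::{ring,monoid_mult}) \<Rightarrow> ('a \<Rightarrow> 'u)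
    \<Rightarrow> ('u \<Rightarrow> ('u \<times> 'u) list) \<Rightarrow> ('u \<Rightarrow> 'a) \<Rightarrow> bool" where
  "left_bialgebroid \<iota> s t \<Delta> \<epsilon> \<longleftrightarrow>
     k_algebra \<iota>
   \<comment> \<open>U is a k-algebra (via s \<circ> \<iota>), s a k-algebra map, t a k-algebra anti-map\<close>
   \<and> (\<forall>c u. s (\<iota> c) * u = u * s (\<iota> c))
   \<and> (\<forall>x y. s (x + y) = s x + s y) \<and> (\<forall>x y. s (x * y) = s x * s y) \<and> s 1 = 1
   \<and> (\<forall>x y. t (x + y) = t x + t y) \<and> (\<forall>x y. t (x * y) = t y * t x) \<and> t 1 = 1
   \<and> (\<forall>c. t (\<iota> c) = s (\<iota> c))
   \<comment> \<open>commuting images\<close>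
   \<and> (\<forall>x y. s x * t y = t y * s x)
   \<comment> \<open>comultiplication: additive, into the Takeuchi product, coassociative, unital, multiplicative\<close>
   \<and> (\<forall>u v. teqA t s (\<Delta> (u + v)) (\<Delta> u @ \<Delta> v))
   \<and> (\<forall>u a. teqA t s (map (\<lambda>(x, y). (x * t a, y)) (\<Delta> u)) (map (\<lambda>(x, y). (x, y * s a)) (\<Delta> u)))
   \<and> (\<forall>u. teqA3 s t [(y1, y2, x2). (x1, x2) \<leftarrow> \<Delta> u, (y1, y2) \<leftarrow> \<Delta> x1]
                    [(x1, y1, y2). (x1, x2) \<leftarrow> \<Delta> u, (y1, y2) \<leftarrow> \<Delta> x2])
   \<and> teqA t s (\<Delta> 1) [(1, 1)]
   \<and> (\<forall>u v. teqA t s (\<Delta> (u * v)) [(x1 * y1, x2 * y2). (x1, x2) \<leftarrow> \<Delta> u, (y1, y2) \<leftarrow> \<Delta> v])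
   \<and> (\<forall>a b c d u. teqA t s (\<Delta> (t c * s b * u * s d * t a))
                     (map (\<lambda>(x, y). (s b * x * s d, t c * y * t a)) (\<Delta> u)))
   \<comment> \<open>counit\<close>
   \<and> (\<forall>u v. \<epsilon> (u + v) = \<epsilon> u + \<epsilon> v)
   \<and> (\<forall>b c u. \<epsilon> (t c * s b * u) = b * \<epsilon> u * c)
   \<and> (\<forall>a u. \<epsilon> (u * t a) = \<epsilon> (u * s a))
   \<and> (\<forall>u v. \<epsilon> (u * v) = \<epsilon> (u * s (\<epsilon> v)))
   \<and> (\<forall>u. sum_list (map (\<lambda>(x, y). s (\<epsilon> x) * y) (\<Delta> u)) = u)
   \<and> (\<forall>u. sum_list (map (\<lambda>(x, y). t (\<epsilon> y) * x) (\<Delta> u)) = u)"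

definition galois_map :: "('u::{ring,monoid_mult} \<Rightarrow> ('u \<times> 'u) list) \<Rightarrow> ('u \<times> 'u) list \<Rightarrow> ('u \<times> 'u) list" where
  "galois_map \<Delta> xs = concat (map (\<lambda>(u, v). map (\<lambda>(x1, x2). (x1, x2 * v)) (\<Delta> u)) xs)"

text \<open>\<open>\<beta>\<close> induces a bijection \<open>{}_\<blacktriangleright>U \<otimes>_{A^op} U_\<triangleleft> \<rightarrow> U_\<triangleleft> \<otimes>_A {}_\<triangleright>U\<close>.\<close>
definition left_hopf_algebroid ::
  "('k::{comm_ring,monoid_mult} \<Rightarrow> 'a::{ring,monoid_mult}) \<Rightarrow> ('a \<Rightarrow> 'u::{ring,monoid_mult}) \<Rightarrow> ('a \<Rightarrow> 'u)
    \<Rightarrow> ('u \<Rightarrow> ('u \<times> 'u) list) \<Rightarrow> ('u \<Rightarrow> 'a) \<Rightarrow> bool" where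
  "left_hopf_algebroid \<iota> s t \<Delta> \<epsilon> \<longleftrightarrow>
     left_bialgebroid \<iota> s t \<Delta> \<epsilon>
   \<and> (\<forall>xs ys. teqA t s (galois_map \<Delta> xs) (galois_map \<Delta> ys) \<longrightarrow> teqAop t xs ys)
   \<and> (\<forall>zs. \<exists>xs. teqA t s (galois_map \<Delta> xs) zs)"

text \<open>\<open>u\<^sub>+ \<otimes> u\<^sub>- = \<beta>\<^sup>-\<^sup>1(u \<otimes> 1)\<close>, some chosen representative.\<close>
definition translation :: "('a \<Rightarrow> 'u::{ring,monoid_mult}) \<Rightarrow> ('a \<Rightarrow> 'u) \<Rightarrow> ('u \<Rightarrow> ('u \<times> 'u) list)
    \<Rightarrow> 'u \<Rightarrow> ('u \<times> 'u) list" where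
  "translation s t \<Delta> u = (SOME xs. teqA t s (galois_map \<Delta> xs) [(u, 1)])"

definition hact :: "('a \<Rightarrow> 'u::{ring,monoid_mult}) \<Rightarrow> ('a \<Rightarrow> 'u) \<Rightarrow> ('u \<Rightarrow> ('u \<times> 'u) list)
    \<Rightarrow> 'u \<Rightarrow> 'u \<Rightarrow> 'u" where
  "hact s t \<Delta> u b = sum_list (map (\<lambda>(x, y). x * b * y) (translation s t \<Delta> u))"

definition bialgebroid_morphism ::
  "('a \<Rightarrow> 'u::{ring,monoid_mult}) \<Rightarrow> ('a \<Rightarrow> 'u) \<Rightarrow> ('u \<Rightarrow> ('u \<times> 'u) list) \<Rightarrow> ('u \<Rightarrow> 'a)
   \<Rightarrow> ('a \<Rightarrow> 'v::{ring,monoid_mult}) \<Rightarrow> ('a \<Rightarrow> 'v) \<Rightarrow> ('v \<Rightarrow> ('v \<times> 'v) list) \<Rightarrow> ('v \<Rightarrow> 'a)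
   \<Rightarrow> ('u \<Rightarrow> 'v) \<Rightarrow> bool" where
  "bialgebroid_morphism sU tU \<Delta>U \<epsilon>U sV tV \<Delta>V \<epsilon>V \<pi> \<longleftrightarrow>
     (\<forall>x y. \<pi> (x + y) = \<pi> x + \<pi> y) \<and> (\<forall>x y. \<pi> (x * y) = \<pi> x * \<pi> y) \<and> \<pi> 1 = 1
   \<and> (\<forall>a. \<pi> (sU a) = sV a) \<and> (\<forall>a. \<pi> (tU a) = tV a)
   \<and> (\<forall>u. \<epsilon>V (\<pi> u) = \<epsilon>U u)
   \<and> (\<forall>u. teqA tV sV (\<Delta>V (\<pi> u)) (map (\<lambda>(x, y). (\<pi> x, \<pi> y)) (\<Delta>U u)))"

definition left_hopf_kernel ::
  "('a \<Rightarrow> 'u::{ring,monoid_mult}) \<Rightarrow> ('u \<Rightarrow> ('u \<times> 'u) list) \<Rightarrow> ('a \<Rightarrow> 'v::{ring,monoid_mult})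
   \<Rightarrow> ('u \<Rightarrow> 'v) \<Rightarrow> 'u set" where
  "left_hopf_kernel tU \<Delta>U sV \<pi> =
     {u. teqA tU sV (map (\<lambda>(x, y). (x, \<pi> y)) (\<Delta>U u)) [(u, 1)]}"

end

theory Submission
  imports Defs "HOL-Library.Multiset"
begin

text \<open>
  Tensor products over \<open>A\<close> are quotients of formal sums, so a map out of one is defined on
  representatives and checked on the generating relations; this universal property drives every
  step. Elements of the kernel \<open>B\<close> commute with \<open>t(A)\<close>, and on the centralizer of \<open>t(A)\<close> the
  sandwich \<open>x \<otimes> y \<mapsto> x b y\<close> is balanced over \<open>A\<^sup>o\<^sup>p\<close>, so \<open>u \<rightharpoonup> b = u\<^sub>+ b u\<^sub>-\<close> is well
  defined. Injectivity of the Galois map transfers the identities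
  \<open>(uv)\<^sub>+ \<otimes> (uv)\<^sub>- = u\<^sub>+ v\<^sub>+ \<otimes> v\<^sub>- u\<^sub>-\<close>, \<open>u\<^sub>(\<^sub>1\<^sub>)\<^sub>+ \<otimes> u\<^sub>(\<^sub>1\<^sub>)\<^sub>- u\<^sub>(\<^sub>2\<^sub>) = u \<otimes> 1\<close>, \<dots> into the
  module-algebra laws. Finally \<open>u \<rightharpoonup> b \<in> B\<close> because
  \<open>(u\<^sub>+ b u\<^sub>-)\<^sub>(\<^sub>1\<^sub>) \<otimes> \<pi>((u\<^sub>+ b u\<^sub>-)\<^sub>(\<^sub>2\<^sub>))
    = u\<^sub>+\<^sub>(\<^sub>1\<^sub>) b u\<^sub>-\<^sub>(\<^sub>1\<^sub>) \<otimes> \<pi>(u\<^sub>+\<^sub>(\<^sub>2\<^sub>) u\<^sub>-\<^sub>(\<^sub>2\<^sub>)) = (u \<rightharpoonup> b) \<otimes> 1\<close>.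
\<close>

section \<open>Formal sums modulo additive relations\<close>

text \<open>The relations a tensor-product quotient induces on representatives, and the fibres of
  additive maps into abelian groups, are all of this kind.\<close>
definition formal_congruence :: "('p list \<Rightarrow> 'p list \<Rightarrow> bool) \<Rightarrow> bool" where
  "formal_congruence R \<longleftrightarrow>
     (\<forall>xs ys. mset xs = mset ys \<longrightarrow> R xs ys)
   \<and> (\<forall>xs ys. R xs ys \<longrightarrow> R ys xs)
   \<and> (\<forall>xs ys zs. R xs ys \<longrightarrow> R ys zs \<longrightarrow> R xs zs)
   \<and> (\<forall>xs ys zs ws. R xs ys \<longrightarrow> R zs ws \<longrightarrow> R (xs @ zs) (ys @ ws))
   \<and> (\<forall>xs ys zs. R (xs @ zs) (ys @ zs) \<longrightarrow> R xs ys)"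

lemma
  assumes "formal_congruence R"
  shows formal_congruence_mset: "mset xs = mset ys \<Longrightarrow> R xs ys"
    and formal_congruence_sym: "R xs ys \<Longrightarrow> R ys xs"
    and formal_congruence_trans: "R xs ys \<Longrightarrow> R ys zs \<Longrightarrow> R xs zs"
    and formal_congruence_append: "R xs ys \<Longrightarrow> R zs ws \<Longrightarrow> R (xs @ zs) (ys @ ws)"
    and formal_congruence_cancel: "R (xs @ zs) (ys @ zs) \<Longrightarrow> R xs ys"
  using assms unfolding formal_congruence_def by blast+

lemma formal_congruence_zspan: "formal_congruence (\<lambda>xs ys. fdiff xs ys \<in> zspan G)"
  unfolding formal_congruence_def
proof (intro conjI allI impI)
  fix xs ys zs ws :: "'a list"
  show "fdiff xs ys \<in> zspan G" if "mset xs = mset ys"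
  proof -
    from that have "fdiff xs ys = (\<lambda>_. 0)"
      by (auto simp: fdiff_def fun_eq_iff simp flip: count_mset)
    then show ?thesis by (simp add: zspan.zspan_zero)
  qed
  show "fdiff ys xs \<in> zspan G" if "fdiff xs ys \<in> zspan G"
  proof -
    have "fdiff ys xs = (\<lambda>q. - fdiff xs ys q)" by (simp add: fdiff_def)
    with zspan_neg[OF that] show ?thesis by simp
  qed
  show "fdiff xs zs \<in> zspan G" if "fdiff xs ys \<in> zspan G" "fdiff ys zs \<in> zspan G"
  proof -
    have "fdiff xs zs = (\<lambda>q. fdiff xs ys q + fdiff ys zs q)" by (simp add: fdiff_def)
    with zspan_add[OF that] show ?thesis by simp
  qed
  show "fdiff (xs @ zs) (ys @ ws) \<in> zspan G" if "fdiff xs ys \<in> zspan G" "fdiff zs ws \<in> zspan G"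
  proof -
    have "fdiff (xs @ zs) (ys @ ws) = (\<lambda>q. fdiff xs ys q + fdiff zs ws q)"
      by (simp add: fdiff_def fun_eq_iff)
    with zspan_add[OF that] show ?thesis by simp
  qed
  show "fdiff xs ys \<in> zspan G" if "fdiff (xs @ zs) (ys @ zs) \<in> zspan G"
  proof -
    have "fdiff (xs @ zs) (ys @ zs) = fdiff xs ys" by (simp add: fdiff_def fun_eq_iff)
    with that show ?thesis by simp
  qed
qed

lemma formal_congruence_sum_list:
  "formal_congruence (\<lambda>xs ys. sum_list (map \<phi> xs) = (sum_list (map \<phi> ys) :: 'g::ab_group_add))"
  unfolding formal_congruence_def
proof (intro conjI allI impI)
  fix xs ys :: "'a list"
  assume "mset xs = mset ys"
  then show "sum_list (map \<phi> xs) = sum_list (map \<phi> ys)"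
    by (metis mset_map sum_mset_sum_list)
qed simp_all

lemma formal_congruence_concat_map:
  assumes "formal_congruence R"
  shows "formal_congruence (\<lambda>xs ys. R (concat (map F xs)) (concat (map F ys)))"
  using assms unfolding formal_congruence_def map_append concat_append
proof (intro conjI allI impI)
  fix xs ys :: "'b list"
  assume "mset xs = mset ys"
  then have "mset (concat (map F xs)) = mset (concat (map F ys))"
    by (simp add: mset_concat flip: sum_mset_sum_list mset_map) (metis mset_map)
  with assms show "R (concat (map F xs)) (concat (map F ys))"
    by (simp add: formal_congruence_def)
qed blast+

lemma formal_congruence_fdiff:
  assumes R: "formal_congruence R" and "fdiff xs ys = fdiff xs' ys'" and "R xs' ys'"
  shows "R xs ys"
proof -
  have "mset (xs @ ys') = mset (ys @ xs')"
  proof (rule multiset_eqI)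
    fix q
    from fun_cong[OF assms(2), of q] show "count (mset (xs @ ys')) q = count (mset (ys @ xs')) q"
      by (simp add: count_mset fdiff_def)
  qed
  then have "R (xs @ ys') (ys @ xs')" by (rule formal_congruence_mset[OF R])
  moreover have "R (ys @ xs') (ys @ ys')"
    using formal_congruence_append[OF R formal_congruence_mset[OF R refl] assms(3)] .
  ultimately have "R (xs @ ys') (ys @ ys')" by (rule formal_congruence_trans[OF R])
  then show ?thesis by (rule formal_congruence_cancel[OF R])
qed

lemma zspan_fdiff_witness:
  assumes "f \<in> zspan G"
    and R: "formal_congruence R"
    and gens: "\<And>g. g \<in> G \<Longrightarrow> \<exists>xs ys. g = fdiff xs ys \<and> R xs ys"
  shows "\<exists>xs ys. f = fdiff xs ys \<and> R xs ys"
  using assms(1)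
proof induct
  case zspan_zero
  have "(\<lambda>_. 0) = fdiff [] []" by (simp add: fdiff_def)
  moreover have "R [] []" by (rule formal_congruence_mset[OF R]) simp
  ultimately show ?case by blast
next
  case (zspan_gen g)
  then show ?case by (rule gens)
next
  case (zspan_add f g)
  then obtain a b a' b' where "f = fdiff a b" "R a b" "g = fdiff a' b'" "R a' b'" by blast
  moreover have "fdiff (a @ a') (b @ b') = (\<lambda>q. fdiff a b q + fdiff a' b' q)"
    by (simp add: fdiff_def fun_eq_iff)
  moreover have "R (a @ a') (b @ b')" by (rule formal_congruence_append[OF R]) fact+
  ultimately show ?case by (intro exI[of _ "a @ a'"] exI[of _ "b @ b'"]) simp
next
  case (zspan_neg f)
  then obtain a b where "f = fdiff a b" "R a b" by blast
  moreover have "fdiff b a = (\<lambda>q. - fdiff a b q)" by (simp add: fdiff_def)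
  moreover have "R b a" by (rule formal_congruence_sym[OF R]) fact
  ultimately show ?case by (intro exI[of _ b] exI[of _ a]) simp
qed

lemma zspan_fdiff_induct:
  assumes "formal_congruence R"
    and "\<And>g. g \<in> G \<Longrightarrow> \<exists>xs ys. g = fdiff xs ys \<and> R xs ys"
    and "fdiff xs ys \<in> zspan G"
  shows "R xs ys"
  using zspan_fdiff_witness[OF assms(3,1,2)] formal_congruence_fdiff[OF assms(1)] by blast

lemma fdiff_single_pair: "fdiff [x] [y, z] = (\<lambda>q. delta x q - delta y q - delta z q)"
  by (auto simp: fdiff_def delta_def fun_eq_iff)

lemma fdiff_single_single: "fdiff [x] [y] = (\<lambda>q. delta x q - delta y q)"
  by (auto simp: fdiff_def delta_def fun_eq_iff)

lemma teq_induct: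
  assumes "teq r l xs ys"
    and R: "formal_congruence R"
    and add_left: "\<And>m m' n. R [(m + m', n)] [(m, n), (m', n)]"
    and add_right: "\<And>m n n'. R [(m, n + n')] [(m, n), (m, n')]"
    and balanced: "\<And>m a n. R [(r m a, n)] [(m, l a n)]"
  shows "R xs ys"
  using R _ assms(1)[unfolded teq_def]
proof (rule zspan_fdiff_induct)
  fix g assume "g \<in> tens_gens r l"
  then show "\<exists>xs ys. g = fdiff xs ys \<and> R xs ys"
    unfolding tens_gens_def
  proof (elim UnE CollectE exE conjE)
    fix m m' n assume "g = (\<lambda>q. delta (m + m', n) q - delta (m, n) q - delta (m', n) q)"
    then show ?thesis
      by (intro exI[of _ "[(m + m', n)]"] exI[of _ "[(m, n), (m', n)]"]) (simp add: fdiff_single_pair add_left)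
  next
    fix m n n' assume "g = (\<lambda>q. delta (m, n + n') q - delta (m, n) q - delta (m, n') q)"
    then show ?thesis
      by (intro exI[of _ "[(m, n + n')]"] exI[of _ "[(m, n), (m, n')]"]) (simp add: fdiff_single_pair add_right)
  next
    fix m a n assume "g = (\<lambda>q. delta (r m a, n) q - delta (m, l a n) q)"
    then show ?thesis
      by (intro exI[of _ "[(r m a, n)]"] exI[of _ "[(m, l a n)]"]) (simp add: fdiff_single_single balanced)
  qed
qed

lemma teq3_induct:
  assumes "teq3 r1 l1 r2 l2 xs ys"
    and R: "formal_congruence R"
    and add1: "\<And>m m' n p. R [(m + m', n, p)] [(m, n, p), (m', n, p)]"
    and add2: "\<And>m n n' p. R [(m, n + n', p)] [(m, n, p), (m, n', p)]"
    and add3: "\<And>m n p p'. R [(m, n, p + p')] [(m, n, p), (m, n, p')]"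
    and balanced1: "\<And>m a n p. R [(r1 m a, n, p)] [(m, l1 a n, p)]"
    and balanced2: "\<And>m a n p. R [(m, r2 n a, p)] [(m, n, l2 a p)]"
  shows "R xs ys"
  using R _ assms(1)[unfolded teq3_def]
proof (rule zspan_fdiff_induct)
  fix g assume "g \<in> tens3_gens r1 l1 r2 l2"
  then show "\<exists>xs ys. g = fdiff xs ys \<and> R xs ys"
    unfolding tens3_gens_def
  proof (elim UnE CollectE exE conjE)
    fix m m' n p assume "g = (\<lambda>q. delta (m + m', n, p) q - delta (m, n, p) q - delta (m', n, p) q)"
    then show ?thesis
      by (intro exI[of _ "[(m + m', n, p)]"] exI[of _ "[(m, n, p), (m', n, p)]"]) (simp add: fdiff_single_pair add1)
  next
    fix m n n' p assume "g = (\<lambda>q. delta (m, n + n', p) q - delta (m, n, p) q - delta (m, n', p) q)"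
    then show ?thesis
      by (intro exI[of _ "[(m, n + n', p)]"] exI[of _ "[(m, n, p), (m, n', p)]"]) (simp add: fdiff_single_pair add2)
  next
    fix m n p p' assume "g = (\<lambda>q. delta (m, n, p + p') q - delta (m, n, p) q - delta (m, n, p') q)"
    then show ?thesis
      by (intro exI[of _ "[(m, n, p + p')]"] exI[of _ "[(m, n, p), (m, n, p')]"]) (simp add: fdiff_single_pair add3)
  next
    fix m a n p assume "g = (\<lambda>q. delta (r1 m a, n, p) q - delta (m, l1 a n, p) q)"
    then show ?thesis
      by (intro exI[of _ "[(r1 m a, n, p)]"] exI[of _ "[(m, l1 a n, p)]"]) (simp add: fdiff_single_single balanced1)
  next
    fix m a n p assume "g = (\<lambda>q. delta (m, r2 n a, p) q - delta (m, n, l2 a p) q)"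
    then show ?thesis
      by (intro exI[of _ "[(m, r2 n a, p)]"] exI[of _ "[(m, n, l2 a p)]"]) (simp add: fdiff_single_single balanced2)
  qed
qed

section \<open>Balanced tensor products over \<open>A\<close>\<close>

lemma teqA_congruence: "formal_congruence (teqA t s')"
  unfolding teqA_def teq_def by (rule formal_congruence_zspan)

lemmas teqA_mset = formal_congruence_mset[OF teqA_congruence]
  and teqA_sym = formal_congruence_sym[OF teqA_congruence]
  and teqA_trans [trans] = formal_congruence_trans[OF teqA_congruence]
  and teqA_append = formal_congruence_append[OF teqA_congruence]
  and teqA_cancel = formal_congruence_cancel[OF teqA_congruence]

lemma teqA3_sym: "teqA3 s t xs ys \<Longrightarrow> teqA3 s t ys xs"
  unfolding teqA3_def teq3_def by (rule formal_congruence_sym[OF formal_congruence_zspan])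

lemma teqA_refl [simp]: "teqA t s' xs xs"
  by (rule teqA_mset) (rule refl)

lemma teqA_add_left: "teqA t s' [(m + m', n)] [(m, n), (m', n)]"
  unfolding teqA_def teq_def tens_gens_def fdiff_single_pair
  by (rule zspan_gen, rule UnI1, rule UnI1) blast

lemma teqA_add_right: "teqA t s' [(m, n + n')] [(m, n), (m, n')]"
  unfolding teqA_def teq_def tens_gens_def fdiff_single_pair
  by (rule zspan_gen, rule UnI1, rule UnI2) blast

lemma teqA_balanced: "teqA t s' [(t a * m, n)] [(m, s' a * n)]"
  unfolding teqA_def teq_def tens_gens_def fdiff_single_single
  by (rule zspan_gen, rule UnI2) blast

lemma teqA_concat:
  "(\<And>x. x \<in> set xs \<Longrightarrow> teqA t s' (F x) (H x)) \<Longrightarrow> teqA t s' (concat (map F xs)) (concat (map H xs))"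
  by (induct xs) (auto intro: teqA_append)

lemma teqA_sum_list_eq:
  fixes \<phi> :: "'u::ring \<times> 'w::ring \<Rightarrow> 'g::ab_group_add"
  assumes "teqA t s' xs ys"
    and "\<And>m m' n. \<phi> (m + m', n) = \<phi> (m, n) + \<phi> (m', n)"
    and "\<And>m n n'. \<phi> (m, n + n') = \<phi> (m, n) + \<phi> (m, n')"
    and "\<And>a m n. \<phi> (t a * m, n) = \<phi> (m, s' a * n)"
  shows "sum_list (map \<phi> xs) = sum_list (map \<phi> ys)"
  by (rule teq_induct[OF assms(1)[unfolded teqA_def] formal_congruence_sum_list]) (simp_all add: assms)

lemma teqAop_sum_list_eq:
  fixes \<phi> :: "'u::ring \<times> 'u \<Rightarrow> 'g::ab_group_add"
  assumes "teqAop t xs ys"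
    and "\<And>m m' n. \<phi> (m + m', n) = \<phi> (m, n) + \<phi> (m', n)"
    and "\<And>m n n'. \<phi> (m, n + n') = \<phi> (m, n) + \<phi> (m, n')"
    and "\<And>a m n. \<phi> (m * t a, n) = \<phi> (m, t a * n)"
  shows "sum_list (map \<phi> xs) = sum_list (map \<phi> ys)"
  by (rule teq_induct[OF assms(1)[unfolded teqAop_def] formal_congruence_sum_list]) (simp_all add: assms)

lemma teqA3_sum_list_eq:
  fixes \<phi> :: "'u::ring \<times> 'u \<times> 'u \<Rightarrow> 'g::ab_group_add"
  assumes "teqA3 s t xs ys"
    and "\<And>m m' n p. \<phi> (m + m', n, p) = \<phi> (m, n, p) + \<phi> (m', n, p)"
    and "\<And>m n n' p. \<phi> (m, n + n', p) = \<phi> (m, n, p) + \<phi> (m, n', p)"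
    and "\<And>m n p p'. \<phi> (m, n, p + p') = \<phi> (m, n, p) + \<phi> (m, n, p')"
    and "\<And>m a n p. \<phi> (t a * m, n, p) = \<phi> (m, s a * n, p)"
    and "\<And>m a n p. \<phi> (m, t a * n, p) = \<phi> (m, n, s a * p)"
  shows "sum_list (map \<phi> xs) = sum_list (map \<phi> ys)"
  by (rule teq3_induct[OF assms(1)[unfolded teqA3_def] formal_congruence_sum_list]) (simp_all add: assms)

lemma teqA_concat_map:
  fixes F :: "'u::ring \<times> 'w::ring \<Rightarrow> ('x::ring \<times> 'y::ring) list"
  assumes "teqA t s' xs ys"
    and "\<And>m m' n. teqA t' s'' (F (m + m', n)) (F (m, n) @ F (m', n))"
    and "\<And>m n n'. teqA t' s'' (F (m, n + n')) (F (m, n) @ F (m, n'))"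
    and "\<And>a m n. teqA t' s'' (F (t a * m, n)) (F (m, s' a * n))"
  shows "teqA t' s'' (concat (map F xs)) (concat (map F ys))"
  by (rule teq_induct[OF assms(1)[unfolded teqA_def] formal_congruence_concat_map[OF teqA_congruence]])
    (simp_all add: assms)

lemma teqA3_concat_map:
  fixes F :: "'u::ring \<times> 'u \<times> 'u \<Rightarrow> ('x::ring \<times> 'y::ring) list"
  assumes "teqA3 s t xs ys"
    and "\<And>m m' n p. teqA t' s'' (F (m + m', n, p)) (F (m, n, p) @ F (m', n, p))"
    and "\<And>m n n' p. teqA t' s'' (F (m, n + n', p)) (F (m, n, p) @ F (m, n', p))"
    and "\<And>m n p p'. teqA t' s'' (F (m, n, p + p')) (F (m, n, p) @ F (m, n, p'))"
    and "\<And>m a n p. teqA t' s'' (F (t a * m, n, p)) (F (m, s a * n, p))"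
    and "\<And>m a n p. teqA t' s'' (F (m, t a * n, p)) (F (m, n, s a * p))"
  shows "teqA t' s'' (concat (map F xs)) (concat (map F ys))"
  by (rule teq3_induct[OF assms(1)[unfolded teqA3_def] formal_congruence_concat_map[OF teqA_congruence]])
    (simp_all add: assms)

lemma teqA_map_pointwise:
  "(\<And>z. z \<in> set zs \<Longrightarrow> teqA t s' [f z] [g z]) \<Longrightarrow> teqA t s' (map f zs) (map g zs)"
  using teqA_concat[where F="\<lambda>z. [f z]" and H="\<lambda>z. [g z]" and xs=zs] by (simp add: map_concat) blast

lemma teqA_map_split:
  "(\<And>z. teqA t s' [f z] [g z, h z]) \<Longrightarrow> teqA t s' (map f zs) (map g zs @ map h zs)"
proof -
  assume "\<And>z. teqA t s' [f z] [g z, h z]"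
  then have "teqA t s' (concat (map (\<lambda>z. [f z]) zs)) (concat (map (\<lambda>z. [g z, h z]) zs))"
    by (rule teqA_concat)
  moreover have "mset (concat (map (\<lambda>z. [g z, h z]) zs)) = mset (map g zs @ map h zs)"
    by (induct zs) auto
  ultimately show ?thesis by (simp add: map_concat teqA_trans[OF _ teqA_mset])
qed

lemma teqA_concat_append: "teqA t s' (concat (map (\<lambda>z. f z @ g z) zs)) (concat (map f zs) @ concat (map g zs))"
  by (rule teqA_mset) (induct zs, auto)

lemma teqA_sum_left: "teqA t s' [(sum_list ms, n)] (map (\<lambda>m. (m, n)) ms)"
proof (induct ms)
  case Nil
  have "teqA t s' ([(0, n)] @ [(0, n)]) ([] @ [(0, n)])"
    using teqA_sym[OF teqA_add_left[of t s' 0 0 n]] by simp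
  then show ?case by (simp add: teqA_cancel)
next
  case (Cons m ms)
  have "teqA t s' [(m + sum_list ms, n)] ([(m, n)] @ [(sum_list ms, n)])"
    using teqA_add_left by simp
  also have "teqA t s' \<dots> ([(m, n)] @ map (\<lambda>m. (m, n)) ms)"
    by (rule teqA_append) (use Cons in auto)
  finally show ?case by simp
qed

lemma teqA_map_pair:
  fixes f :: "'u::ring \<Rightarrow> 'x::ring" and g :: "'w::ring \<Rightarrow> 'y::ring"
  assumes "teqA t s' xs ys"
    and f_add: "\<And>x y. f (x + y) = f x + f y" and g_add: "\<And>x y. g (x + y) = g x + g y"
    and balanced: "\<And>a m n. teqA t' s'' [(f (t a * m), g n)] [(f m, g (s' a * n))]"
  shows "teqA t' s'' (map (\<lambda>(x, y). (f x, g y)) xs) (map (\<lambda>(x, y). (f x, g y)) ys)"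
  using teqA_concat_map[OF assms(1), where F="\<lambda>z. [(f (fst z), g (snd z))]" and t'=t' and s''=s'']
  by (simp add: split_def f_add g_add teqA_add_left teqA_add_right balanced)

lemma teqA_mult_right:
  "teqA t s' xs ys \<Longrightarrow> teqA t s' (map (\<lambda>(x, y). (x * c, y * d)) xs) (map (\<lambda>(x, y). (x * c, y * d)) ys)"
  by (erule teqA_map_pair) (simp_all add: distrib_right mult.assoc teqA_balanced)

lemma teqA_mult_right1:
  "teqA t s' xs ys \<Longrightarrow> teqA t s' (map (\<lambda>(x, y). (x * c, y)) xs) (map (\<lambda>(x, y). (x * c, y)) ys)"
  by (erule teqA_map_pair) (simp_all add: distrib_right mult.assoc teqA_balanced)

lemma teqA_mult_right2:
  "teqA t s' xs ys \<Longrightarrow> teqA t s' (map (\<lambda>(x, y). (x, y * d)) xs) (map (\<lambda>(x, y). (x, y * d)) ys)"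
  by (erule teqA_map_pair) (simp_all add: distrib_right mult.assoc teqA_balanced)

lemma teqA_mult_left1:
  assumes "\<And>a. c * t a = t a * c" and "teqA t s' xs ys"
  shows "teqA t s' (map (\<lambda>(x, y). (c * x, y)) xs) (map (\<lambda>(x, y). (c * x, y)) ys)"
proof -
  have "c * (t a * m) = t a * (c * m)" for a m by (simp add: mult.assoc[symmetric] assms(1))
  then show ?thesis by (intro teqA_map_pair[OF assms(2)]) (simp_all add: distrib_left teqA_balanced)
qed

lemma teqA_mult_left2:
  assumes "\<And>a. c * s' a = s' a * c" and "teqA t s' xs ys"
  shows "teqA t s' (map (\<lambda>(x, y). (x, c * y)) xs) (map (\<lambda>(x, y). (x, c * y)) ys)"
proof -
  have "c * (s' a * m) = s' a * (c * m)" for a m by (simp add: mult.assoc[symmetric] assms(1))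
  then show ?thesis by (intro teqA_map_pair[OF assms(2)]) (simp_all add: distrib_left teqA_balanced)
qed

lemma mset_concat_map_swap:
  "mset (concat (map (\<lambda>x. map (f x) ys) xs)) = mset (concat (map (\<lambda>y. map (\<lambda>x. f x y) xs) ys))"
proof (induct xs)
  case Nil
  then show ?case by (induct ys) auto
next
  case (Cons x xs)
  have "mset (concat (map (\<lambda>y. map (\<lambda>x. f x y) (x # xs)) ys))
      = mset (map (f x) ys) + mset (concat (map (\<lambda>y. map (\<lambda>x. f x y) xs) ys))"
    by (induct ys) auto
  with Cons show ?case by simp
qed

lemma mset_concat_map_swap_pairs:
  "mset (concat (map (\<lambda>(x1, x2). map (\<lambda>(y1, y2). f x1 x2 y1 y2) ys) xs))
   = mset (concat (map (\<lambda>(y1, y2). map (\<lambda>(x1, x2). f x1 x2 y1 y2) xs) ys))"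
  using mset_concat_map_swap[of "\<lambda>x y. f (fst x) (snd x) (fst y) (snd y)" ys xs] by (simp add: split_def)

lemma concat_map_concat: "concat (map f (concat xss)) = concat (map (\<lambda>xs. concat (map f xs)) xss)"
  by (induct xss) auto

lemma mset_concat_map_rotate:
  "mset (concat (map (\<lambda>a. concat (map (\<lambda>b. map (\<lambda>c. f a b c) zs) ys)) xs))
   = mset (concat (map (\<lambda>b. concat (map (\<lambda>c. map (\<lambda>a. f a b c) xs) zs)) ys))"
proof -
  define ps where "ps = concat (map (\<lambda>b. map (Pair b) zs) ys)"
  have flat: "concat (map (\<lambda>b. map (g b) zs) ys) = map (\<lambda>p. g (fst p) (snd p)) ps" for g :: "_ \<Rightarrow> _ \<Rightarrow> 'x"
    by (simp add: ps_def map_concat comp_def)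
  have lhs: "concat (map (\<lambda>a. concat (map (\<lambda>b. map (\<lambda>c. f a b c) zs) ys)) xs)
                = concat (map (\<lambda>a. map (\<lambda>p. f a (fst p) (snd p)) ps) xs)"
    by (simp add: flat)
  have rhs: "concat (map (\<lambda>p. map (\<lambda>a. f a (fst p) (snd p)) xs) ps)
           = concat (map (\<lambda>b. concat (map (\<lambda>c. map (\<lambda>a. f a b c) xs) zs)) ys)"
    by (simp add: ps_def concat_map_concat comp_def)
  show ?thesis unfolding lhs rhs[symmetric] by (rule mset_concat_map_swap)
qed

lemma sum_list_map_concat: "sum_list (map f (concat xss)) = sum_list (map (\<lambda>xs. sum_list (map f xs)) xss)"
  by (induct xss) auto

section \<open>Left bialgebroids\<close>

locale is_left_bialgebroid =
  fixes \<iota> :: "'k::{comm_ring,monoid_mult} \<Rightarrow> 'a::{ring,monoid_mult}"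
    and s t :: "'a \<Rightarrow> 'u::{ring,monoid_mult}" and \<Delta> :: "'u \<Rightarrow> ('u \<times> 'u) list" and \<epsilon> :: "'u \<Rightarrow> 'a"
  assumes left_bialgebroid: "left_bialgebroid \<iota> s t \<Delta> \<epsilon>"
begin

lemma s_add: "s (x + y) = s x + s y"
  and s_mult: "s (x * y) = s x * s y"
  and s_one [simp]: "s 1 = 1"
  and t_add: "t (x + y) = t x + t y"
  and t_mult: "t (x * y) = t y * t x"
  and t_one [simp]: "t 1 = 1"
  and s_t_commute: "s x * t y = t y * s x"
  and s_iota_central: "s (\<iota> r) * u = u * s (\<iota> r)"
  and Delta_add: "teqA t s (\<Delta> (u + v)) (\<Delta> u @ \<Delta> v)"
  and Delta_takeuchi: "teqA t s (map (\<lambda>(x, y). (x * t a, y)) (\<Delta> u)) (map (\<lambda>(x, y). (x, y * s a)) (\<Delta> u))"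
  and Delta_coassoc: "teqA3 s t (concat (map (\<lambda>(x1, x2). map (\<lambda>(y1, y2). (y1, y2, x2)) (\<Delta> x1)) (\<Delta> u)))
                        (concat (map (\<lambda>(x1, x2). map (\<lambda>(y1, y2). (x1, y1, y2)) (\<Delta> x2)) (\<Delta> u)))"
  and Delta_one: "teqA t s (\<Delta> 1) [(1, 1)]"
  and Delta_mult: "teqA t s (\<Delta> (u * v)) (concat (map (\<lambda>(x1, x2). map (\<lambda>(y1, y2). (x1 * y1, x2 * y2)) (\<Delta> v)) (\<Delta> u)))"
  and Delta_bimodule: "teqA t s (\<Delta> (t c * s b * u * s d * t a))
                         (map (\<lambda>(x, y). (s b * x * s d, t c * y * t a)) (\<Delta> u))"
  and eps_add: "\<epsilon> (u + v) = \<epsilon> u + \<epsilon> v"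
  and eps_bimodule: "\<epsilon> (t c * s b * u) = b * \<epsilon> u * c"
  and counit_left: "sum_list (map (\<lambda>(x, y). s (\<epsilon> x) * y) (\<Delta> u)) = u"
  and counit_right: "sum_list (map (\<lambda>(x, y). t (\<epsilon> y) * x) (\<Delta> u)) = u"
  using left_bialgebroid by (simp_all add: left_bialgebroid_def)

lemma eps_s_left: "\<epsilon> (s b * u) = b * \<epsilon> u"
  using eps_bimodule[of 1 b u] by simp

lemma eps_t_left: "\<epsilon> (t c * u) = \<epsilon> u * c"
  using eps_bimodule[of c 1 u] by simp

lemma Delta_s_left: "teqA t s (\<Delta> (s b * u)) (map (\<lambda>(x, y). (s b * x, y)) (\<Delta> u))"
  using Delta_bimodule[of 1 b u 1 1] by simp

lemma Delta_t_left: "teqA t s (\<Delta> (t c * u)) (map (\<lambda>(x, y). (x, t c * y)) (\<Delta> u))"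
  using Delta_bimodule[of c 1 u 1 1] by simp

lemma Delta_s_right: "teqA t s (\<Delta> (u * s d)) (map (\<lambda>(x, y). (x * s d, y)) (\<Delta> u))"
  using Delta_bimodule[of 1 1 u d 1] by simp

lemma s_uminus: "s (- x) = - s x"
proof -
  have "s 0 = 0" using s_add[of 0 0] by simp
  then show ?thesis using s_add[of x "- x"] by (simp add: add.commute eq_neg_iff_add_eq_0)
qed

lemma Delta_zero: "teqA t s (\<Delta> 0) []"
proof -
  have "teqA t s ([] @ \<Delta> 0) (\<Delta> 0 @ \<Delta> 0)" using Delta_add[of 0 0] by simp
  then show ?thesis by (rule teqA_sym[OF teqA_cancel])
qed

lemma Delta_sum_list: "teqA t s (\<Delta> (sum_list (map f zs))) (concat (map (\<lambda>z. \<Delta> (f z)) zs))"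
proof (induct zs)
  case Nil
  then show ?case by (simp add: Delta_zero)
next
  case (Cons z zs)
  have "teqA t s (\<Delta> (f z + sum_list (map f zs))) (\<Delta> (f z) @ \<Delta> (sum_list (map f zs)))"
    by (rule Delta_add)
  also have "teqA t s \<dots> (\<Delta> (f z) @ concat (map (\<lambda>z. \<Delta> (f z)) zs))"
    by (rule teqA_append) (use Cons in auto)
  finally show ?case by simp
qed

lemma Delta_mult3:
  "teqA t s (\<Delta> (x * b * y))
     (concat (map (\<lambda>(x1, x2). concat (map (\<lambda>(b1, b2). map (\<lambda>(y1, y2). (x1 * b1 * y1, x2 * b2 * y2)) (\<Delta> y)) (\<Delta> b))) (\<Delta> x)))"
proof -
  define Z where "Z = (\<lambda>(z1, z2). map (\<lambda>(y1, y2). (z1 * y1, z2 * y2)) (\<Delta> y))"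
  have "teqA t s (\<Delta> (x * b * y)) (concat (map Z (\<Delta> (x * b))))"
    using Delta_mult[of "x * b" y] by (simp add: Z_def)
  also have "teqA t s \<dots> (concat (map Z (concat (map (\<lambda>(x1, x2). map (\<lambda>(b1, b2). (x1 * b1, x2 * b2)) (\<Delta> b)) (\<Delta> x)))))"
  proof (rule teqA_concat_map[OF Delta_mult])
    show "teqA t s (Z (m + m', n)) (Z (m, n) @ Z (m', n))" for m m' n
      unfolding Z_def by (simp add: split_def, rule teqA_map_split) (simp add: distrib_right teqA_add_left)
    show "teqA t s (Z (m, n + n')) (Z (m, n) @ Z (m, n'))" for m n n'
      unfolding Z_def by (simp add: split_def, rule teqA_map_split) (simp add: distrib_right teqA_add_right)
    show "teqA t s (Z (t a * m, n)) (Z (m, s a * n))" for a m n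
      unfolding Z_def by (simp add: split_def, rule teqA_map_pointwise) (simp add: mult.assoc teqA_balanced)
  qed
  finally show ?thesis by (simp add: Z_def concat_map_concat comp_def split_def mult.assoc)
qed

lemma t_eps_one: "t (\<epsilon> 1) = 1"
proof -
  have "sum_list (map (\<lambda>(x, y). t (\<epsilon> y) * x) (\<Delta> 1)) = sum_list (map (\<lambda>(x, y). t (\<epsilon> y) * x) [(1, 1)])"
    by (rule teqA_sum_list_eq[OF Delta_one])
      (auto simp: distrib_left distrib_right eps_add t_add eps_s_left t_mult mult.assoc)
  then show ?thesis using counit_right[of 1] by simp
qed

end

section \<open>The translation map and the action\<close>

definition sandwich :: "('u::{ring,monoid_mult} \<times> 'u) list \<Rightarrow> 'u \<Rightarrow> 'u" where
  "sandwich xs b = sum_list (map (\<lambda>(x, y). x * b * y) xs)"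

definition centralizer :: "('a \<Rightarrow> 'u::monoid_mult) \<Rightarrow> 'u set" where
  "centralizer f = {b. \<forall>a. f a * b = b * f a}"

lemma sandwich_append: "sandwich (xs @ ys) b = sandwich xs b + sandwich ys b"
  by (simp add: sandwich_def)

lemma sandwich_concat: "sandwich (concat (map f zs)) b = sum_list (map (\<lambda>z. sandwich (f z) b) zs)"
  by (induct zs) (simp_all add: sandwich_append, simp add: sandwich_def)

lemma sandwich_add: "sandwich xs (b + b') = sandwich xs b + sandwich xs b'"
  by (simp add: sandwich_def distrib_left distrib_right split_def sum_list_addf)

lemma sandwich_mult_left1: "sandwich (map (\<lambda>(x, y). (c * x, y)) xs) b = c * sandwich xs b"
  by (induct xs) (auto simp: sandwich_def algebra_simps)

lemma sandwich_mult_right1: "sandwich (map (\<lambda>(x, y). (x * c, y)) xs) b = sandwich xs (c * b)"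
  by (induct xs) (auto simp: sandwich_def algebra_simps)

lemma sandwich_mult_left2: "sandwich (map (\<lambda>(x, y). (x, c * y)) xs) b = sandwich xs (b * c)"
  by (induct xs) (auto simp: sandwich_def algebra_simps)

lemma sandwich_mult_right2: "sandwich (map (\<lambda>(x, y). (x, y * c)) xs) b = sandwich xs b * c"
  by (induct xs) (auto simp: sandwich_def algebra_simps)

lemma sandwich_compose:
  "sandwich (concat (map (\<lambda>(x, y). map (\<lambda>(x', y'). (x * x', y' * y)) ys) xs)) b = sandwich xs (sandwich ys b)"
proof -
  have "sandwich (map (\<lambda>(x', y'). (x * x', y' * y)) ys) b = x * sandwich ys b * y" for x y
    by (induct ys) (auto simp: sandwich_def algebra_simps)
  then show ?thesis
    by (induct xs) (auto simp: sandwich_append, simp_all add: sandwich_def)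
qed

lemma sandwich_teqAop_eq:
  assumes "b \<in> centralizer t" and "teqAop t xs ys"
  shows "sandwich xs b = sandwich ys b"
proof -
  have comm: "t a * (b * n) = b * (t a * n)" for a n
    using assms(1) by (simp add: centralizer_def flip: mult.assoc)
  show ?thesis unfolding sandwich_def
    by (rule teqAop_sum_list_eq[OF assms(2)]) (auto simp: distrib_left distrib_right mult.assoc comm)
qed

lemma galois_map_append: "galois_map \<Delta> (xs @ ys) = galois_map \<Delta> xs @ galois_map \<Delta> ys"
  by (simp add: galois_map_def)

lemma galois_map_concat: "galois_map \<Delta> (concat xss) = concat (map (galois_map \<Delta>) xss)"
  by (induct xss) (simp_all add: galois_map_append, simp add: galois_map_def)

lemma galois_map_mult_right:
  "galois_map \<Delta> (map (\<lambda>(x, y). (x, y * c)) xs) = map (\<lambda>(x, y). (x, y * c)) (galois_map \<Delta> xs)"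
  by (induct xs) (auto simp: galois_map_def mult.assoc split_def)

lemma sum_list_galois_map:
  "sum_list (map \<phi> (galois_map \<Delta> xs))
   = sum_list (map (\<lambda>(x, y). sum_list (map (\<lambda>(x1, x2). \<phi> (x1, x2 * y)) (\<Delta> x))) xs)"
  by (induct xs) (auto simp: galois_map_def split_def comp_def)

lemma galois_map_single [simp]: "galois_map \<Delta> [(x, y)] = map (\<lambda>(x1, x2). (x1, x2 * y)) (\<Delta> x)"
  by (simp add: galois_map_def)

lemma galois_map_singletons: "galois_map \<Delta> xs = concat (map (\<lambda>z. galois_map \<Delta> [z]) xs)"
  by (induct xs) (auto simp: galois_map_def)

lemma teqA_galois_map_map:
  assumes "\<And>x y. teqA t s' (galois_map \<Delta> [(f x, g y)]) (map h (galois_map \<Delta> [(x, y)]))"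
  shows "teqA t s' (galois_map \<Delta> (map (\<lambda>(x, y). (f x, g y)) xs)) (map h (galois_map \<Delta> xs))"
proof -
  have "teqA t s' (concat (map (\<lambda>z. galois_map \<Delta> [(f (fst z), g (snd z))]) xs))
                  (concat (map (\<lambda>z. map h (galois_map \<Delta> [z])) xs))"
    by (rule teqA_concat) (use assms in \<open>auto simp: split_def\<close>)
  then show ?thesis
    by (subst (1 2) galois_map_singletons) (simp add: map_concat comp_def split_def)
qed

locale is_left_hopf_algebroid = is_left_bialgebroid +
  assumes galois_injective: "teqA t s (galois_map \<Delta> xs) (galois_map \<Delta> ys) \<Longrightarrow> teqAop t xs ys"
    and galois_surjective: "\<exists>xs. teqA t s (galois_map \<Delta> xs) zs"
begin

definition translates where
  "translates u xs \<longleftrightarrow> teqA t s (galois_map \<Delta> xs) [(u, 1)]"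

abbreviation hopf_action (infixr "\<rightharpoonup>" 60) where
  "u \<rightharpoonup> b \<equiv> hact s t \<Delta> u b"

lemma translates_translation: "translates u (translation s t \<Delta> u)"
  unfolding translates_def translation_def by (rule someI_ex) (rule galois_surjective)

lemma hact_eq_sandwich: "u \<rightharpoonup> b = sandwich (translation s t \<Delta> u) b"
  by (simp add: hact_def sandwich_def)

lemma sandwich_translates_eq:
  assumes "b \<in> centralizer t" and "translates u xs" and "translates u ys"
  shows "sandwich xs b = sandwich ys b"
proof -
  have "teqA t s (galois_map \<Delta> xs) (galois_map \<Delta> ys)"
    using assms(2,3) unfolding translates_def by (blast intro: teqA_trans teqA_sym)
  then show ?thesis by (rule sandwich_teqAop_eq[OF assms(1) galois_injective])
qed

lemma hact_eq_sandwich_translates: "b \<in> centralizer t \<Longrightarrow> translates u xs \<Longrightarrow> u \<rightharpoonup> b = sandwich xs b"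
  using sandwich_translates_eq translates_translation hact_eq_sandwich by metis

lemma translates_add: "translates u xs \<Longrightarrow> translates v ys \<Longrightarrow> translates (u + v) (xs @ ys)"
  unfolding translates_def galois_map_append
  using teqA_append teqA_sym[OF teqA_add_left] teqA_trans by fastforce

lemma translates_one: "translates 1 [(1, 1)]"
  unfolding translates_def using Delta_one by simp

lemma translates_t_left:
  assumes "translates u xs"
  shows "translates (t a * u) (map (\<lambda>(x, y). (x, y * s a)) xs)"
proof -
  have "teqA t s (map (\<lambda>(x, y). (x, y * s a)) (galois_map \<Delta> xs)) [(u, s a)]"
    using teqA_mult_right2[OF assms[unfolded translates_def], of "s a"] by simp
  also have "teqA t s [(u, s a)] [(t a * u, 1)]"
    using teqA_sym[OF teqA_balanced[where t=t and s'=s and a=a and m=u and n=1]] by simp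
  finally show ?thesis unfolding translates_def galois_map_mult_right .
qed

lemma translates_s_left:
  assumes "translates u xs"
  shows "translates (s a * u) (map (\<lambda>(x, y). (s a * x, y)) xs)"
proof -
  have "teqA t s (galois_map \<Delta> (map (\<lambda>(x, y). (s a * x, y)) xs))
                 (map (\<lambda>(p, q). (s a * p, q)) (galois_map \<Delta> xs))"
    by (rule teqA_galois_map_map[where g=id, simplified])
      (use teqA_mult_right2[OF Delta_s_left] in \<open>simp add: map_map comp_def split_def\<close>)
  also have "teqA t s \<dots> (map (\<lambda>(p, q). (s a * p, q)) [(u, 1)])"
    by (rule teqA_mult_left1[OF _ assms[unfolded translates_def]]) (simp add: s_t_commute)
  finally show ?thesis unfolding translates_def by simp
qed

lemma translates_s_right:
  assumes "translates u xs"
  shows "translates (u * s a) (map (\<lambda>(x, y). (x * s a, y)) xs)"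
proof -
  have "teqA t s (galois_map \<Delta> (map (\<lambda>(x, y). (x * s a, y)) xs))
                 (map (\<lambda>(p, q). (p * s a, q)) (galois_map \<Delta> xs))"
    by (rule teqA_galois_map_map[where g=id, simplified])
      (use teqA_mult_right2[OF Delta_s_right] in \<open>simp add: map_map comp_def split_def\<close>)
  also have "teqA t s \<dots> (map (\<lambda>(p, q). (p * s a, q)) [(u, 1)])"
    by (rule teqA_mult_right1[OF assms[unfolded translates_def]])
  finally show ?thesis unfolding translates_def by simp
qed

lemma translates_t_right:
  assumes "translates u xs"
  shows "translates (u * t a) (map (\<lambda>(x, y). (x, s a * y)) xs)"
proof -
  have "teqA t s (galois_map \<Delta> (map (\<lambda>(x, y). (x, s a * y)) xs))
                 (map (\<lambda>(p, q). (p * t a, q)) (galois_map \<Delta> xs))"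
    by (rule teqA_galois_map_map[where f=id, simplified])
      (use teqA_mult_right2[OF teqA_sym[OF Delta_takeuchi]] in \<open>simp add: map_map comp_def split_def mult.assoc\<close>)
  also have "teqA t s \<dots> (map (\<lambda>(p, q). (p * t a, q)) [(u, 1)])"
    by (rule teqA_mult_right1[OF assms[unfolded translates_def]])
  finally show ?thesis unfolding translates_def by simp
qed

lemma translates_t_commute:
  assumes "translates u xs"
  shows "teqAop t (map (\<lambda>(x, y). (t a * x, y)) xs) (map (\<lambda>(x, y). (x, y * t a)) xs)"
proof (rule galois_injective)
  have "teqA t s (galois_map \<Delta> (map (\<lambda>(x, y). (t a * x, y)) xs))
                 (map (\<lambda>(p, q). (p, t a * q)) (galois_map \<Delta> xs))"
    by (rule teqA_galois_map_map[where g=id, simplified])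
      (use teqA_mult_right2[OF Delta_t_left] in \<open>simp add: map_map comp_def split_def mult.assoc\<close>)
  also have "teqA t s \<dots> [(u, t a)]"
    using teqA_mult_left2[OF _ assms[unfolded translates_def], of "t a"] by (simp add: s_t_commute)
  also have "teqA t s \<dots> (map (\<lambda>(p, q). (p, q * t a)) (galois_map \<Delta> xs))"
    using teqA_sym[OF teqA_mult_right2[OF assms[unfolded translates_def], of "t a"]] by simp
  finally show "teqA t s (galois_map \<Delta> (map (\<lambda>(x, y). (t a * x, y)) xs))
                         (galois_map \<Delta> (map (\<lambda>(x, y). (x, y * t a)) xs))"
    by (simp only: galois_map_mult_right)
qed

lemma galois_map_mult_left:
  "teqA t s (galois_map \<Delta> (map (\<lambda>(x', y'). (x * x', y' * y)) ys))
            (concat (map (\<lambda>(p, q). map (\<lambda>(x1, x2). (x1 * p, x2 * q * y)) (\<Delta> x)) (galois_map \<Delta> ys)))"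
proof -
  have "teqA t s (galois_map \<Delta> [(x * fst z, snd z * y)])
                 (concat (map (\<lambda>(p, q). map (\<lambda>(x1, x2). (x1 * p, x2 * q * y)) (\<Delta> x)) (galois_map \<Delta> [z])))"
    for z
  proof -
    obtain x' y' where z: "z = (x', y')" by fastforce
    have "teqA t s (galois_map \<Delta> [(x * x', y' * y)])
        (concat (map (\<lambda>(x1, x2). map (\<lambda>(y1, y2). (x1 * y1, x2 * y2 * (y' * y))) (\<Delta> x')) (\<Delta> x)))"
      using teqA_mult_right2[OF Delta_mult, of "y' * y" x x']
      by (simp add: map_concat map_map comp_def split_def)
    also have "teqA t s \<dots> (concat (map (\<lambda>(y1, y2). map (\<lambda>(x1, x2). (x1 * y1, x2 * y2 * (y' * y))) (\<Delta> x)) (\<Delta> x')))"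
      by (rule teqA_mset, rule mset_concat_map_swap_pairs)
    finally show ?thesis by (simp add: z map_map split_def comp_def mult.assoc)
  qed
  then have "teqA t s (concat (map (\<lambda>z. galois_map \<Delta> [(x * fst z, snd z * y)]) ys))
      (concat (map (\<lambda>z. concat (map (\<lambda>(p, q). map (\<lambda>(x1, x2). (x1 * p, x2 * q * y)) (\<Delta> x)) (galois_map \<Delta> [z]))) ys))"
    by (intro teqA_concat)
  then show ?thesis
    by (subst (1 2) galois_map_singletons) (simp add: comp_def split_def concat_map_concat)
qed

lemma translates_mult:
  assumes u: "translates u xs" and v: "translates v ys"
  shows "translates (u * v) (concat (map (\<lambda>(x, y). map (\<lambda>(x', y'). (x * x', y' * y)) ys) xs))"
proof -
  define K where "K x y = (\<lambda>(p, q). map (\<lambda>(x1, x2). (x1 * p, x2 * q * y)) (\<Delta> x))" for x y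
  have K_balanced: "teqA t s (concat (map (K x y) (galois_map \<Delta> ys))) (K x y (v, 1))" for x y
  proof -
    have "teqA t s (concat (map (K x y) (galois_map \<Delta> ys))) (concat (map (K x y) [(v, 1)]))"
      using v[unfolded translates_def]
    proof (rule teqA_concat_map)
      show "teqA t s (K x y (m + m', n)) (K x y (m, n) @ K x y (m', n))" for m m' n
        unfolding K_def by (simp add: split_def, rule teqA_map_split) (simp add: distrib_left teqA_add_left)
      show "teqA t s (K x y (m, n + n')) (K x y (m, n) @ K x y (m, n'))" for m n n'
        unfolding K_def by (simp add: split_def, rule teqA_map_split)
          (simp add: distrib_left distrib_right teqA_add_right)
      show "teqA t s (K x y (t a * m, n)) (K x y (m, s a * n))" for a m n
        using teqA_mult_right[OF Delta_takeuchi, of m "n * y" a x]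
        unfolding K_def by (simp add: map_map comp_def split_def mult.assoc)
    qed
    then show ?thesis by simp
  qed
  have K_step: "teqA t s (galois_map \<Delta> (map (\<lambda>(x', y'). (x * x', y' * y)) ys)) (K x y (v, 1))" for x y
    using galois_map_mult_left K_balanced unfolding K_def by (rule teqA_trans)
  have "teqA t s (galois_map \<Delta> (concat (map (\<lambda>(x, y). map (\<lambda>(x', y'). (x * x', y' * y)) ys) xs)))
                 (concat (map (\<lambda>(x, y). K x y (v, 1)) xs))"
    unfolding galois_map_concat map_map
    by (rule teqA_concat) (auto simp: K_step)
  also have "concat (map (\<lambda>(x, y). K x y (v, 1)) xs) = map (\<lambda>(p, q). (p * v, q)) (galois_map \<Delta> xs)"
    by (simp add: K_def galois_map_def map_concat map_map comp_def split_def)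
  also have "teqA t s \<dots> (map (\<lambda>(p, q). (p * v, q)) [(u, 1)])"
    by (rule teqA_mult_right1[OF u[unfolded translates_def]])
  finally show ?thesis unfolding translates_def by simp
qed

lemma hact_add_left:
  assumes "b \<in> centralizer t"
  shows "(u + v) \<rightharpoonup> b = (u \<rightharpoonup> b) + (v \<rightharpoonup> b)"
  using hact_eq_sandwich_translates[OF assms translates_add[OF translates_translation translates_translation]]
  by (simp add: sandwich_append hact_eq_sandwich)

lemma hact_add_right: "u \<rightharpoonup> (b + b') = (u \<rightharpoonup> b) + (u \<rightharpoonup> b')"
  by (simp add: hact_eq_sandwich sandwich_add)

lemma hact_s_left:
  assumes "b \<in> centralizer t"
  shows "(s a * u) \<rightharpoonup> b = s a * (u \<rightharpoonup> b)"
  using hact_eq_sandwich_translates[OF assms translates_s_left[OF translates_translation]]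
  by (simp add: sandwich_mult_left1 hact_eq_sandwich)

lemma hact_t_left:
  assumes "b \<in> centralizer t"
  shows "(t a * u) \<rightharpoonup> b = (u \<rightharpoonup> b) * s a"
  using hact_eq_sandwich_translates[OF assms translates_t_left[OF translates_translation]]
  by (simp add: sandwich_mult_right2 hact_eq_sandwich)

lemma hact_s_right:
  assumes "b \<in> centralizer t"
  shows "(u * s a) \<rightharpoonup> b = u \<rightharpoonup> (s a * b)"
  using hact_eq_sandwich_translates[OF assms translates_s_right[OF translates_translation]]
  by (simp add: sandwich_mult_right1 hact_eq_sandwich)

lemma hact_t_right:
  assumes "b \<in> centralizer t"
  shows "(u * t a) \<rightharpoonup> b = u \<rightharpoonup> (b * s a)"
  using hact_eq_sandwich_translates[OF assms translates_t_right[OF translates_translation]]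
  by (simp add: sandwich_mult_left2 hact_eq_sandwich)

lemma hact_s_iota_right:
  assumes "b \<in> centralizer t"
  shows "u \<rightharpoonup> (s (\<iota> r) * b) = s (\<iota> r) * (u \<rightharpoonup> b)"
  using hact_s_right[OF assms, of u "\<iota> r"] hact_s_left[OF assms, of "\<iota> r" u] by (simp add: s_iota_central)

lemma hact_one_left: "b \<in> centralizer t \<Longrightarrow> 1 \<rightharpoonup> b = b"
  using hact_eq_sandwich_translates[OF _ translates_one] by (simp add: sandwich_def)

lemma hact_mult:
  assumes "b \<in> centralizer t"
  shows "(u * v) \<rightharpoonup> b = u \<rightharpoonup> (v \<rightharpoonup> b)"
  using hact_eq_sandwich_translates[OF assms translates_mult[OF translates_translation translates_translation]]
  by (simp add: sandwich_compose hact_eq_sandwich)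

lemma hact_in_centralizer:
  assumes b: "b \<in> centralizer t"
  shows "u \<rightharpoonup> b \<in> centralizer t"
proof -
  have "sandwich (map (\<lambda>(x, y). (t a * x, y)) (translation s t \<Delta> u)) b
      = sandwich (map (\<lambda>(x, y). (x, y * t a)) (translation s t \<Delta> u)) b" for a
    by (rule sandwich_teqAop_eq[OF b translates_t_commute[OF translates_translation]])
  then show ?thesis
    by (simp add: centralizer_def hact_eq_sandwich sandwich_mult_left1 sandwich_mult_right2)
qed

lemma hact_one_right: "u \<rightharpoonup> 1 = s (\<epsilon> u)"
proof -
  let ?xs = "translation s t \<Delta> u"
  have "sum_list (map (\<lambda>(p, q). s (\<epsilon> p) * q) (galois_map \<Delta> ?xs)) = sum_list (map (\<lambda>(p, q). s (\<epsilon> p) * q) [(u, 1)])"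
    by (rule teqA_sum_list_eq[OF translates_translation[unfolded translates_def]])
      (auto simp: distrib_left distrib_right eps_add s_add eps_t_left s_mult mult.assoc)
  moreover have "sum_list (map (\<lambda>(p, q). s (\<epsilon> p) * q) (galois_map \<Delta> ?xs)) = sandwich ?xs 1"
    unfolding sum_list_galois_map sandwich_def
    by (rule arg_cong[where f=sum_list], rule map_cong[OF refl])
      (auto simp: mult.assoc[symmetric] sum_list_mult_const counit_left[unfolded split_def] split_def)
  ultimately show ?thesis by (simp add: hact_eq_sandwich)
qed

text \<open>\<open>x\<^sub>(\<^sub>1\<^sub>)\<^sub>+ \<otimes> x\<^sub>(\<^sub>1\<^sub>)\<^sub>- x\<^sub>(\<^sub>2\<^sub>)\<close> is a preimage of \<open>x \<otimes> 1\<close> under the Galois map, hence equal to \<open>x \<otimes> 1\<close>.\<close>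
lemma hact_counit:
  assumes b: "b \<in> centralizer t"
  shows "sum_list (map (\<lambda>(x1, x2). (x1 \<rightharpoonup> b) * x2) (\<Delta> x)) = x * b"
proof -
  define ys where "ys = concat (map (\<lambda>(x1, x2). map (\<lambda>(p, q). (p, q * x2)) (translation s t \<Delta> x1)) (\<Delta> x))"
  have "teqA t s (galois_map \<Delta> ys) (concat (map (\<lambda>(x1, x2). [(x1, x2)]) (\<Delta> x)))"
    unfolding ys_def galois_map_concat map_map
  proof (rule teqA_concat)
    fix z assume "z \<in> set (\<Delta> x)"
    obtain x1 x2 where z: "z = (x1, x2)" by fastforce
    show "teqA t s ((galois_map \<Delta> \<circ> (\<lambda>(x1, x2). map (\<lambda>(p, q). (p, q * x2)) (translation s t \<Delta> x1))) z)
                   ((\<lambda>(x1, x2). [(x1, x2)]) z)"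
      using teqA_mult_right2[OF translates_translation[unfolded translates_def], of x2 x1]
      by (simp add: z galois_map_mult_right)
  qed
  then have "teqAop t ys [(x, 1)]"
    by (intro galois_injective) (simp add: split_def)
  then have "sandwich ys b = sandwich [(x, 1)] b" by (rule sandwich_teqAop_eq[OF b])
  moreover have "sandwich ys b = sum_list (map (\<lambda>(x1, x2). (x1 \<rightharpoonup> b) * x2) (\<Delta> x))"
    unfolding ys_def sandwich_concat by (simp add: split_def sandwich_mult_right2[unfolded split_def] hact_eq_sandwich)
  ultimately show ?thesis by (simp add: sandwich_def)
qed

lemma sum_list_hact_pair_eq:
  assumes b: "b \<in> centralizer t" and b': "b' \<in> centralizer t" and "teqA t s xs ys"
  shows "sum_list (map (\<lambda>(p, q). (p \<rightharpoonup> b) * (q \<rightharpoonup> b') * n) xs)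
       = sum_list (map (\<lambda>(p, q). (p \<rightharpoonup> b) * (q \<rightharpoonup> b') * n) ys)"
  by (rule teqA_sum_list_eq[OF assms(3)])
    (auto simp: hact_add_left[OF b] hact_add_left[OF b'] hact_t_left[OF b] hact_s_left[OF b']
      distrib_left distrib_right mult.assoc)

text \<open>\<open>(x\<^sub>(\<^sub>1\<^sub>)\<^sub>(\<^sub>1\<^sub>) \<rightharpoonup> b)(x\<^sub>(\<^sub>1\<^sub>)\<^sub>(\<^sub>2\<^sub>) \<rightharpoonup> b') x\<^sub>(\<^sub>2\<^sub>) = (x\<^sub>(\<^sub>1\<^sub>) \<rightharpoonup> b)(x\<^sub>(\<^sub>2\<^sub>)\<^sub>(\<^sub>1\<^sub>) \<rightharpoonup> b') x\<^sub>(\<^sub>2\<^sub>)\<^sub>(\<^sub>2\<^sub>) = x b b'\<close>, by coassociativity and \<open>hact_counit\<close> twice.\<close>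
lemma hact_pair_counit:
  assumes b: "b \<in> centralizer t" and b': "b' \<in> centralizer t"
  shows "sum_list (map (\<lambda>(x1, x2). sum_list (map (\<lambda>(p, q). (p \<rightharpoonup> b) * (q \<rightharpoonup> b') * (x2 * y)) (\<Delta> x1))) (\<Delta> x))
       = x * b * b' * y"
proof -
  define \<phi> where "\<phi> = (\<lambda>(a1, a2, a3). (a1 \<rightharpoonup> b) * (a2 \<rightharpoonup> b') * (a3 * y))"
  have "sum_list (map (\<lambda>(x1, x2). sum_list (map (\<lambda>(p, q). (p \<rightharpoonup> b) * (q \<rightharpoonup> b') * (x2 * y)) (\<Delta> x1))) (\<Delta> x))
      = sum_list (map \<phi> (concat (map (\<lambda>(x1, x2). map (\<lambda>(y1, y2). (y1, y2, x2)) (\<Delta> x1)) (\<Delta> x))))"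
    by (simp add: sum_list_map_concat \<phi>_def split_def comp_def)
  also have "\<dots> = sum_list (map \<phi> (concat (map (\<lambda>(x1, x2). map (\<lambda>(y1, y2). (x1, y1, y2)) (\<Delta> x2)) (\<Delta> x))))"
    by (rule teqA3_sum_list_eq[OF Delta_coassoc])
      (auto simp: \<phi>_def hact_add_left[OF b] hact_add_left[OF b'] hact_t_left[OF b] hact_t_left[OF b']
        hact_s_left[OF b'] distrib_left distrib_right mult.assoc)
  also have "\<dots> = sum_list (map (\<lambda>(x1, x2). (x1 \<rightharpoonup> b) * sum_list (map (\<lambda>(y1, y2). (y1 \<rightharpoonup> b') * y2) (\<Delta> x2)) * y) (\<Delta> x))"
    unfolding sum_list_map_concat map_map
    by (rule arg_cong[where f=sum_list], rule map_cong[OF refl])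
      (auto simp: \<phi>_def split_def comp_def mult.assoc simp flip: sum_list_const_mult sum_list_mult_const)
  also have "\<dots> = sum_list (map (\<lambda>(x1, x2). (x1 \<rightharpoonup> b) * x2) (\<Delta> x)) * b' * y"
    by (simp add: hact_counit[OF b', unfolded split_def] split_def mult.assoc flip: sum_list_mult_const)
  also have "\<dots> = x * b * b' * y"
    by (simp add: hact_counit[OF b])
  finally show ?thesis .
qed

lemma hact_mult_right:
  assumes b: "b \<in> centralizer t" and b': "b' \<in> centralizer t"
  shows "u \<rightharpoonup> (b * b') = sum_list (map (\<lambda>(x1, x2). (x1 \<rightharpoonup> b) * (x2 \<rightharpoonup> b')) (\<Delta> u))"
proof -
  define \<Gamma> where "\<Gamma> = (\<lambda>(x, y). sum_list (map (\<lambda>(p, q). (p \<rightharpoonup> b) * (q \<rightharpoonup> b') * y) (\<Delta> x)))"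
  let ?xs = "translation s t \<Delta> u"
  have inner: "x * (b * b') * y = sum_list (map (\<lambda>(x1, x2). \<Gamma> (x1, x2 * y)) (\<Delta> x))" for x y
    using hact_pair_counit[OF b b', where x=x and y=y] by (simp add: \<Gamma>_def mult.assoc)
  have "u \<rightharpoonup> (b * b') = sum_list (map \<Gamma> (galois_map \<Delta> ?xs))"
    unfolding sum_list_galois_map hact_eq_sandwich sandwich_def inner ..
  also have "\<dots> = sum_list (map \<Gamma> [(u, 1)])"
  proof (rule teqA_sum_list_eq[OF translates_translation[unfolded translates_def]])
    show "\<Gamma> (m + m', n) = \<Gamma> (m, n) + \<Gamma> (m', n)" for m m' n
      unfolding \<Gamma>_def using sum_list_hact_pair_eq[OF b b' Delta_add[of m m'], of n] by simp
    show "\<Gamma> (m, n + n') = \<Gamma> (m, n) + \<Gamma> (m, n')" for m n n'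
      unfolding \<Gamma>_def by (simp add: split_def distrib_left sum_list_addf)
    show "\<Gamma> (t a * m, n) = \<Gamma> (m, s a * n)" for a m n
      unfolding \<Gamma>_def using sum_list_hact_pair_eq[OF b b' Delta_t_left[of a m], of n]
      by (simp add: split_def comp_def hact_t_left[OF b'] mult.assoc)
  qed
  also have "\<dots> = sum_list (map (\<lambda>(x1, x2). (x1 \<rightharpoonup> b) * (x2 \<rightharpoonup> b')) (\<Delta> u))"
    by (simp add: \<Gamma>_def)
  finally show ?thesis .
qed

lemma teqA_hact_counit:
  assumes b: "b \<in> centralizer t"
  shows "teqA t s' (concat (map (\<lambda>(y1, y2). map (\<lambda>(r1, r2). ((y1 \<rightharpoonup> b) * (y2 * r1), z * r2)) rs) (\<Delta> x)))
                  (map (\<lambda>(r1, r2). (x * b * r1, z * r2)) rs)"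
proof -
  have "teqA t s' (concat (map (\<lambda>(y1, y2). map (\<lambda>(r1, r2). ((y1 \<rightharpoonup> b) * (y2 * r1), z * r2)) rs) (\<Delta> x)))
                  (concat (map (\<lambda>(r1, r2). map (\<lambda>(y1, y2). ((y1 \<rightharpoonup> b) * (y2 * r1), z * r2)) (\<Delta> x)) rs))"
    by (rule teqA_mset, rule mset_concat_map_swap_pairs)
  also have "teqA t s' \<dots> (concat (map (\<lambda>(r1, r2). [(x * b * r1, z * r2)]) rs))"
  proof (rule teqA_concat)
    fix r assume "r \<in> set rs"
    obtain r1 r2 where r: "r = (r1, r2)" by fastforce
    have "sum_list (map (\<lambda>(y1, y2). (y1 \<rightharpoonup> b) * (y2 * r1)) (\<Delta> x)) = x * b * r1"
      using hact_counit[OF b, of x] by (simp add: split_def sum_list_mult_const flip: mult.assoc)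
    then show "teqA t s' ((\<lambda>(r1, r2). map (\<lambda>(y1, y2). ((y1 \<rightharpoonup> b) * (y2 * r1), z * r2)) (\<Delta> x)) r)
                         ((\<lambda>(r1, r2). [(x * b * r1, z * r2)]) r)"
      using teqA_sym[OF teqA_sum_left[of t s' "map (\<lambda>(y1, y2). (y1 \<rightharpoonup> b) * (y2 * r1)) (\<Delta> x)" "z * r2"]]
      by (simp add: r map_map comp_def split_def)
  qed
  finally show ?thesis by (simp add: split_def)
qed

text \<open>\<open>x\<^sub>(\<^sub>1\<^sub>) b y\<^sub>(\<^sub>1\<^sub>) \<otimes> x\<^sub>(\<^sub>2\<^sub>) y\<^sub>(\<^sub>2\<^sub>) = (x\<^sub>(\<^sub>1\<^sub>) \<rightharpoonup> b)(x\<^sub>(\<^sub>2\<^sub>) y)\<^sub>(\<^sub>1\<^sub>) \<otimes> (x\<^sub>(\<^sub>2\<^sub>) y)\<^sub>(\<^sub>2\<^sub>)\<close>: expand the right-hand side by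
  multiplicativity and coassociativity, then collapse with \<open>teqA_hact_counit\<close>.\<close>
lemma Delta_sandwich_hact:
  assumes b: "b \<in> centralizer t"
  shows "teqA t s (concat (map (\<lambda>(x1, x2). map (\<lambda>(z1, z2). ((x1 \<rightharpoonup> b) * z1, z2)) (\<Delta> (x2 * y))) (\<Delta> x)))
                 (concat (map (\<lambda>(x1, x2). map (\<lambda>(y1, y2). (x1 * b * y1, x2 * y2)) (\<Delta> y)) (\<Delta> x)))"
proof -
  have comm: "(m \<rightharpoonup> b) * t a = t a * (m \<rightharpoonup> b)" for m a
    using hact_in_centralizer[OF b] by (simp add: centralizer_def)
  then have comm': "(m \<rightharpoonup> b) * (t a * r) = t a * ((m \<rightharpoonup> b) * r)" for m a r
    by (simp flip: mult.assoc)
  define \<Phi> where "\<Phi> = (\<lambda>(a1, a2, a3). map (\<lambda>(r1, r2). ((a1 \<rightharpoonup> b) * (a2 * r1), a3 * r2)) (\<Delta> y))"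
  have "teqA t s (concat (map (\<lambda>(x1, x2). map (\<lambda>(z1, z2). ((x1 \<rightharpoonup> b) * z1, z2)) (\<Delta> (x2 * y))) (\<Delta> x)))
                 (concat (map \<Phi> (concat (map (\<lambda>(x1, x2). map (\<lambda>(y1, y2). (x1, y1, y2)) (\<Delta> x2)) (\<Delta> x)))))"
    unfolding concat_map_concat map_map
  proof (rule teqA_concat)
    fix z assume "z \<in> set (\<Delta> x)"
    obtain x1 x2 where z: "z = (x1, x2)" by fastforce
    show "teqA t s ((\<lambda>(x1, x2). map (\<lambda>(z1, z2). ((x1 \<rightharpoonup> b) * z1, z2)) (\<Delta> (x2 * y))) z)
                   (((\<lambda>xs. concat (map \<Phi> xs)) \<circ> (\<lambda>(x1, x2). map (\<lambda>(y1, y2). (x1, y1, y2)) (\<Delta> x2))) z)"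
      using teqA_mult_left1[OF comm Delta_mult, of x1 x2 y]
      by (simp add: z \<Phi>_def map_concat comp_def split_def mult.assoc)
  qed
  also have "teqA t s \<dots> (concat (map \<Phi> (concat (map (\<lambda>(x1, x2). map (\<lambda>(y1, y2). (y1, y2, x2)) (\<Delta> x1)) (\<Delta> x)))))"
  proof (rule teqA3_concat_map[OF teqA3_sym[OF Delta_coassoc]])
    show "teqA t s (\<Phi> (m + m', n, p)) (\<Phi> (m, n, p) @ \<Phi> (m', n, p))" for m m' n p
      unfolding \<Phi>_def by (simp add: split_def, rule teqA_map_split)
        (simp add: hact_add_left[OF b] distrib_right teqA_add_left)
    show "teqA t s (\<Phi> (m, n + n', p)) (\<Phi> (m, n, p) @ \<Phi> (m, n', p))" for m n n' p
      unfolding \<Phi>_def by (simp add: split_def, rule teqA_map_split)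
        (simp add: distrib_right distrib_left teqA_add_left)
    show "teqA t s (\<Phi> (m, n, p + p')) (\<Phi> (m, n, p) @ \<Phi> (m, n, p'))" for m n p p'
      unfolding \<Phi>_def by (simp add: split_def, rule teqA_map_split) (simp add: distrib_right teqA_add_right)
    show "teqA t s (\<Phi> (t a * m, n, p)) (\<Phi> (m, s a * n, p))" for m a n p
      unfolding \<Phi>_def by (simp add: hact_t_left[OF b] mult.assoc)
    show "teqA t s (\<Phi> (m, t a * n, p)) (\<Phi> (m, n, s a * p))" for m a n p
      unfolding \<Phi>_def by (simp add: split_def, rule teqA_map_pointwise)
        (simp add: mult.assoc comm' teqA_balanced)
  qed
  also have "teqA t s \<dots> (concat (map (\<lambda>(x1, x2). map (\<lambda>(y1, y2). (x1 * b * y1, x2 * y2)) (\<Delta> y)) (\<Delta> x)))"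
    unfolding concat_map_concat map_map
    by (rule teqA_concat) (use teqA_hact_counit[OF b] in \<open>auto simp: \<Phi>_def comp_def split_def\<close>)
  finally show ?thesis .
qed

lemma Delta_hact:
  assumes b: "b \<in> centralizer t"
  shows "teqA t s (concat (map (\<lambda>(x, y). concat (map (\<lambda>(x1, x2). map (\<lambda>(y1, y2). (x1 * b * y1, x2 * y2)) (\<Delta> y)) (\<Delta> x)))
                              (translation s t \<Delta> u)))
                 [(u \<rightharpoonup> b, 1)]"
proof -
  let ?xs = "translation s t \<Delta> u"
  define H where "H = (\<lambda>(m, n). map (\<lambda>(n1, n2). ((m \<rightharpoonup> b) * n1, n2)) (\<Delta> n))"
  have comm: "(m \<rightharpoonup> b) * t a = t a * (m \<rightharpoonup> b)" for m a
    using hact_in_centralizer[OF b] by (simp add: centralizer_def)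
  have "teqA t s (concat (map (\<lambda>(x, y). concat (map (\<lambda>(x1, x2). map (\<lambda>(y1, y2). (x1 * b * y1, x2 * y2)) (\<Delta> y)) (\<Delta> x))) ?xs))
                 (concat (map (\<lambda>(x, y). concat (map (\<lambda>(x1, x2). H (x1, x2 * y)) (\<Delta> x))) ?xs))"
    by (rule teqA_concat) (use teqA_sym[OF Delta_sandwich_hact[OF b]] in \<open>auto simp: H_def split_def\<close>)
  also have "\<dots> = concat (map H (galois_map \<Delta> ?xs))"
    by (simp add: galois_map_def concat_map_concat comp_def split_def)
  also have "teqA t s \<dots> (concat (map H [(u, 1)]))"
    using translates_translation[unfolded translates_def]
  proof (rule teqA_concat_map)
    show "teqA t s (H (m + m', n)) (H (m, n) @ H (m', n))" for m m' n
      unfolding H_def by (simp add: split_def, rule teqA_map_split)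
        (simp add: hact_add_left[OF b] distrib_right teqA_add_left)
    show "teqA t s (H (m, n + n')) (H (m, n) @ H (m, n'))" for m n n'
      using teqA_mult_left1[OF comm Delta_add, of m n n'] unfolding H_def by simp
    show "teqA t s (H (t a * m, n)) (H (m, s a * n))" for a m n
      using teqA_sym[OF teqA_mult_left1[OF comm Delta_s_left, of m a n]]
      unfolding H_def by (simp add: hact_t_left[OF b] map_map comp_def split_def mult.assoc)
  qed
  also have "teqA t s (concat (map H [(u, 1)])) [(u \<rightharpoonup> b, 1)]"
    using teqA_mult_left1[OF comm Delta_one, of u] by (simp add: H_def)
  finally show ?thesis .
qed

end

section \<open>The left Hopf kernel\<close>

lemma teqA_concat_map_split:
  "(\<And>w v. teqA t s' [f w v] [g w v, h w v])
   \<Longrightarrow> teqA t s' (concat (map (\<lambda>w. map (f w) vs) ws))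
                (concat (map (\<lambda>w. map (g w) vs) ws) @ concat (map (\<lambda>w. map (h w) vs) ws))"
  by (rule teqA_trans[OF teqA_concat teqA_concat_append]) (rule teqA_map_split)

locale hopf_kernel = is_left_hopf_algebroid \<iota> s t \<Delta> \<epsilon> + V: is_left_bialgebroid \<iota> sV tV \<Delta>V \<epsilon>V
  for \<iota> :: "'k::{comm_ring,monoid_mult} \<Rightarrow> 'a::{ring,monoid_mult}"
    and s t :: "'a \<Rightarrow> 'u::{ring,monoid_mult}" and \<Delta> :: "'u \<Rightarrow> ('u \<times> 'u) list" and \<epsilon> :: "'u \<Rightarrow> 'a"
    and sV tV :: "'a \<Rightarrow> 'v::{ring,monoid_mult}" and \<Delta>V :: "'v \<Rightarrow> ('v \<times> 'v) list" and \<epsilon>V :: "'v \<Rightarrow> 'a" +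
  fixes \<pi> :: "'u \<Rightarrow> 'v"
  assumes morphism: "bialgebroid_morphism s t \<Delta> \<epsilon> sV tV \<Delta>V \<epsilon>V \<pi>"
begin

lemma pi_add: "\<pi> (x + y) = \<pi> x + \<pi> y"
  and pi_mult: "\<pi> (x * y) = \<pi> x * \<pi> y"
  and pi_one [simp]: "\<pi> 1 = 1"
  and pi_s: "\<pi> (s a) = sV a"
  and pi_eps: "\<epsilon>V (\<pi> u) = \<epsilon> u"
  using morphism by (simp_all add: bialgebroid_morphism_def)

lemma teqA_map_pi:
  "teqA t s xs ys \<Longrightarrow> teqA t sV (map (\<lambda>(x, y). (x, \<pi> y)) xs) (map (\<lambda>(x, y). (x, \<pi> y)) ys)"
  by (erule teqA_map_pair) (simp_all add: pi_add pi_mult pi_s teqA_balanced)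

abbreviation B where "B \<equiv> left_hopf_kernel t \<Delta> sV \<pi>"

lemma kernel_iff: "b \<in> B \<longleftrightarrow> teqA t sV (map (\<lambda>(x, y). (x, \<pi> y)) (\<Delta> b)) [(b, 1)]"
  by (simp add: left_hopf_kernel_def)

lemma one_in_kernel: "1 \<in> B"
  unfolding kernel_iff using teqA_map_pi[OF Delta_one] by simp

text \<open>Applying \<open>x \<otimes> v \<mapsto> t(\<epsilon>\<^sub>V(v)) x\<close> to \<open>b\<^sub>(\<^sub>1\<^sub>) t(a) \<otimes> \<pi>(b\<^sub>(\<^sub>2\<^sub>)) = b\<^sub>(\<^sub>1\<^sub>) \<otimes> \<pi>(b\<^sub>(\<^sub>2\<^sub>)) s(a)\<close> gives \<open>b t(a) = t(a) b\<close>.\<close>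
lemma kernel_subset_centralizer: "B \<subseteq> centralizer t"
proof
  fix b assume "b \<in> B"
  then have kb: "teqA t sV (map (\<lambda>(x, y). (x, \<pi> y)) (\<Delta> b)) [(b, 1)]" by (simp add: kernel_iff)
  have "teqA t sV [(b * t a, 1)] [(t a * b, 1)]" for a
  proof -
    have "teqA t sV [(b * t a, 1)] (map (\<lambda>(x, y). (x * t a, \<pi> y)) (\<Delta> b))"
      using teqA_sym[OF teqA_mult_right1[OF kb, of "t a"]] by (simp add: map_map comp_def split_def)
    also have "teqA t sV \<dots> (map (\<lambda>(x, y). (x, \<pi> y * sV a)) (\<Delta> b))"
      using teqA_map_pi[OF Delta_takeuchi[of a b]] by (simp add: map_map comp_def split_def pi_mult pi_s)
    also have "teqA t sV \<dots> [(b, sV a)]"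
      using teqA_mult_right2[OF kb, of "sV a"] by (simp add: map_map comp_def split_def)
    also have "teqA t sV \<dots> [(t a * b, 1)]"
      using teqA_sym[OF teqA_balanced[where t=t and s'=sV and a=a and m=b and n=1]] by simp
    finally show ?thesis .
  qed
  then have "sum_list (map (\<lambda>(x, y). t (\<epsilon>V y) * x) [(b * t a, 1)]) = sum_list (map (\<lambda>(x, y). t (\<epsilon>V y) * x) [(t a * b, 1)])"
    for a
    by (rule teqA_sum_list_eq)
      (auto simp: distrib_left distrib_right V.eps_add t_add V.eps_s_left t_mult mult.assoc)
  moreover have "t (\<epsilon>V 1) = 1" using pi_eps[of 1] t_eps_one by simp
  ultimately show "b \<in> centralizer t" by (simp add: centralizer_def)
qed

lemma s_in_kernel: "s a \<in> B"
proof -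
  have "teqA t s (\<Delta> (s a)) (map (\<lambda>(x, y). (s a * x, y)) (\<Delta> 1))"
    using Delta_s_left[of a 1] by simp
  also have "teqA t s \<dots> (map (\<lambda>(x, y). (s a * x, y)) [(1, 1)])"
    by (rule teqA_mult_left1[OF _ Delta_one]) (simp add: s_t_commute)
  finally show ?thesis unfolding kernel_iff using teqA_map_pi by fastforce
qed

lemma kernel_add:
  assumes "b \<in> B" and "b' \<in> B"
  shows "b + b' \<in> B"
proof -
  have "teqA t sV (map (\<lambda>(x, y). (x, \<pi> y)) (\<Delta> (b + b'))) (map (\<lambda>(x, y). (x, \<pi> y)) (\<Delta> b @ \<Delta> b'))"
    by (rule teqA_map_pi[OF Delta_add])
  also have "teqA t sV \<dots> ([(b, 1)] @ [(b', 1)])"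
    unfolding map_append by (rule teqA_append) (use assms in \<open>simp_all add: kernel_iff\<close>)
  also have "teqA t sV \<dots> [(b + b', 1)]"
    using teqA_sym[OF teqA_add_left] by simp
  finally show ?thesis unfolding kernel_iff .
qed

lemma kernel_uminus:
  assumes "b \<in> B"
  shows "- b \<in> B"
proof -
  have minus: "s (- 1) * b = - b" by (simp add: s_uminus)
  have "teqA t sV (map (\<lambda>(x, y). (x, \<pi> y)) (\<Delta> (s (- 1) * b)))
                  (map (\<lambda>(x, y). (s (- 1) * x, y)) (map (\<lambda>(x, y). (x, \<pi> y)) (\<Delta> b)))"
    using teqA_map_pi[OF Delta_s_left[of "- 1" b]] by (simp add: map_map comp_def split_def)
  also have "teqA t sV \<dots> (map (\<lambda>(x, y). (s (- 1) * x, y)) [(b, 1)])"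
    by (rule teqA_mult_left1) (use assms in \<open>simp_all add: kernel_iff s_t_commute\<close>)
  finally show ?thesis unfolding kernel_iff by (simp add: minus)
qed

lemma kernel_mult:
  assumes b: "b \<in> B" and b': "b' \<in> B"
  shows "b * b' \<in> B"
proof -
  have kb: "teqA t sV (map (\<lambda>(x, y). (x, \<pi> y)) (\<Delta> b)) [(b, 1)]" using b by (simp add: kernel_iff)
  have "teqA t sV (map (\<lambda>(x, y). (x, \<pi> y)) (\<Delta> (b * b')))
      (concat (map (\<lambda>(x1, x2). map (\<lambda>(y1, y2). (x1 * y1, \<pi> x2 * \<pi> y2)) (\<Delta> b')) (\<Delta> b)))"
    using teqA_map_pi[OF Delta_mult[of b b']] by (simp add: map_concat map_map comp_def split_def pi_mult)
  also have "teqA t sV \<dots> (concat (map (\<lambda>(y1, y2). map (\<lambda>(x1, x2). (x1 * y1, \<pi> x2 * \<pi> y2)) (\<Delta> b)) (\<Delta> b')))"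
    by (rule teqA_mset, rule mset_concat_map_swap_pairs)
  also have "teqA t sV \<dots> (concat (map (\<lambda>(y1, y2). [(b * y1, \<pi> y2)]) (\<Delta> b')))"
  proof (rule teqA_concat)
    fix y assume "y \<in> set (\<Delta> b')"
    obtain y1 y2 where y: "y = (y1, y2)" by fastforce
    show "teqA t sV ((\<lambda>(y1, y2). map (\<lambda>(x1, x2). (x1 * y1, \<pi> x2 * \<pi> y2)) (\<Delta> b)) y)
                    ((\<lambda>(y1, y2). [(b * y1, \<pi> y2)]) y)"
      using teqA_mult_right[OF kb, of y1 "\<pi> y2"] by (simp add: y map_map comp_def split_def)
  qed
  also have "\<dots> = map (\<lambda>(x, y). (b * x, y)) (map (\<lambda>(x, y). (x, \<pi> y)) (\<Delta> b'))"
    by (simp add: split_def)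
  also have "teqA t sV \<dots> (map (\<lambda>(x, y). (b * x, y)) [(b', 1)])"
    using b' kernel_subset_centralizer[THEN subsetD, OF b]
    by (intro teqA_mult_left1) (simp_all add: kernel_iff centralizer_def)
  finally show ?thesis unfolding kernel_iff by simp
qed

lemma teqA_Delta_two_sided:
  fixes x y :: 'u
  defines "F \<equiv> \<lambda>(m, n). concat (map (\<lambda>w. map (\<lambda>v. (fst v * m * fst w, \<pi> (snd v) * n * \<pi> (snd w))) (\<Delta> x)) (\<Delta> y))"
  assumes "teqA t sV zs zs'"
  shows "teqA t sV (concat (map F zs)) (concat (map F zs'))"
  using assms(2)
proof (rule teqA_concat_map)
  show "teqA t sV (F (m + m', n)) (F (m, n) @ F (m', n))" for m m' n
    unfolding F_def prod.case by (rule teqA_concat_map_split) (simp add: distrib_left distrib_right teqA_add_left)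
  show "teqA t sV (F (m, n + n')) (F (m, n) @ F (m, n'))" for m n n'
    unfolding F_def prod.case by (rule teqA_concat_map_split) (simp add: distrib_left distrib_right teqA_add_right)
  have takeuchi: "teqA t sV (map (\<lambda>(p, q). (p * t a, \<pi> q)) (\<Delta> x)) (map (\<lambda>(p, q). (p, \<pi> q * sV a)) (\<Delta> x))" for a
    using teqA_map_pi[OF Delta_takeuchi[of a x]] by (simp add: map_map comp_def split_def pi_mult pi_s)
  show "teqA t sV (F (t a * m, n)) (F (m, sV a * n))" for a m n
    unfolding F_def prod.case
  proof (rule teqA_concat)
    fix w
    show "teqA t sV (map (\<lambda>v. (fst v * (t a * m) * fst w, \<pi> (snd v) * n * \<pi> (snd w))) (\<Delta> x))
                    (map (\<lambda>v. (fst v * m * fst w, \<pi> (snd v) * (sV a * n) * \<pi> (snd w))) (\<Delta> x))"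
      using teqA_mult_right[OF takeuchi[of a], where c="m * fst w" and d="n * \<pi> (snd w)"]
      by (simp add: map_map comp_def split_def mult.assoc)
  qed
qed

lemma kernel_Delta_sandwich:
  assumes "b \<in> B"
  shows "teqA t sV (map (\<lambda>(x, y). (x, \<pi> y)) (\<Delta> (x * b * y)))
                   (map (\<lambda>(x, y). (x, \<pi> y)) (concat (map (\<lambda>(x1, x2). map (\<lambda>(y1, y2). (x1 * b * y1, x2 * y2)) (\<Delta> y)) (\<Delta> x))))"
proof -
  define F where "F = (\<lambda>(m, n). concat (map (\<lambda>w. map (\<lambda>v. (fst v * m * fst w, \<pi> (snd v) * n * \<pi> (snd w))) (\<Delta> x)) (\<Delta> y)))"
  define f :: "'u \<times> 'u \<Rightarrow> 'u \<times> 'u \<Rightarrow> 'u \<times> 'u \<Rightarrow> 'u \<times> 'v"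
    where "f = (\<lambda>p q r. (fst p * fst q * fst r, \<pi> (snd p) * \<pi> (snd q) * \<pi> (snd r)))"
  have "teqA t sV (map (\<lambda>(x, y). (x, \<pi> y)) (\<Delta> (x * b * y)))
                  (concat (map (\<lambda>p. concat (map (\<lambda>q. map (\<lambda>r. f p q r) (\<Delta> y)) (\<Delta> b))) (\<Delta> x)))"
    using teqA_map_pi[OF Delta_mult3] by (simp add: f_def map_concat comp_def split_def pi_mult)
  also have "teqA t sV \<dots> (concat (map (\<lambda>q. concat (map (\<lambda>r. map (\<lambda>p. f p q r) (\<Delta> x)) (\<Delta> y))) (\<Delta> b)))"
    by (rule teqA_mset, rule mset_concat_map_rotate)
  also have "\<dots> = concat (map F (map (\<lambda>(x, y). (x, \<pi> y)) (\<Delta> b)))"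
    by (simp add: f_def F_def comp_def split_def)
  also have "teqA t sV \<dots> (concat (map F [(b, 1)]))"
    unfolding F_def by (rule teqA_Delta_two_sided) (use assms in \<open>simp add: kernel_iff\<close>)
  also have "\<dots> = concat (map (\<lambda>r. map (\<lambda>p. f p (b, 1) r) (\<Delta> x)) (\<Delta> y))"
    by (simp add: f_def F_def)
  also have "teqA t sV \<dots> (concat (map (\<lambda>p. map (\<lambda>r. f p (b, 1) r) (\<Delta> y)) (\<Delta> x)))"
    by (rule teqA_mset, rule mset_concat_map_swap[symmetric])
  also have "\<dots> = map (\<lambda>(x, y). (x, \<pi> y)) (concat (map (\<lambda>(x1, x2). map (\<lambda>(y1, y2). (x1 * b * y1, x2 * y2)) (\<Delta> y)) (\<Delta> x)))"
    by (simp add: f_def map_concat comp_def split_def pi_mult)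
  finally show ?thesis .
qed

lemma hact_in_kernel:
  assumes "b \<in> B"
  shows "u \<rightharpoonup> b \<in> B"
proof -
  have b: "b \<in> centralizer t" using assms kernel_subset_centralizer by blast
  let ?xs = "translation s t \<Delta> u"
  have "teqA t sV (map (\<lambda>(x, y). (x, \<pi> y)) (\<Delta> (u \<rightharpoonup> b)))
                  (concat (map (\<lambda>(x, y). map (\<lambda>(x, y). (x, \<pi> y)) (\<Delta> (x * b * y))) ?xs))"
    using teqA_map_pi[OF Delta_sum_list[of "\<lambda>(x, y). x * b * y" ?xs]]
    by (simp add: hact_eq_sandwich sandwich_def map_concat comp_def split_def)
  also have "teqA t sV \<dots> (concat (map (\<lambda>(x, y). map (\<lambda>(x, y). (x, \<pi> y))
      (concat (map (\<lambda>(x1, x2). map (\<lambda>(y1, y2). (x1 * b * y1, x2 * y2)) (\<Delta> y)) (\<Delta> x)))) ?xs))"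
    by (rule teqA_concat) (auto simp: kernel_Delta_sandwich[OF assms])
  also have "\<dots> = map (\<lambda>(x, y). (x, \<pi> y))
      (concat (map (\<lambda>(x, y). concat (map (\<lambda>(x1, x2). map (\<lambda>(y1, y2). (x1 * b * y1, x2 * y2)) (\<Delta> y)) (\<Delta> x))) ?xs))"
    by (simp add: map_concat comp_def split_def)
  also have "teqA t sV \<dots> (map (\<lambda>(x, y). (x, \<pi> y)) [(u \<rightharpoonup> b, 1)])"
    by (rule teqA_map_pi[OF Delta_hact[OF b]])
  finally show ?thesis unfolding kernel_iff by simp
qed

end

theorem lemma2p6:
  fixes \<iota> :: "'k::{comm_ring,monoid_mult} \<Rightarrow> 'a::{ring,monoid_mult}"
    and sU tU :: "'a \<Rightarrow> 'u::{ring,monoid_mult}" and \<Delta>U :: "'u \<Rightarrow> ('u \<times> 'u) list" and \<epsilon>U :: "'u \<Rightarrow> 'a"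
    and sV tV :: "'a \<Rightarrow> 'v::{ring,monoid_mult}" and \<Delta>V :: "'v \<Rightarrow> ('v \<times> 'v) list" and \<epsilon>V :: "'v \<Rightarrow> 'a"
    and \<pi> :: "'u \<Rightarrow> 'v"
  assumes HU: "left_hopf_algebroid \<iota> sU tU \<Delta>U \<epsilon>U"
    and HV: "left_hopf_algebroid \<iota> sV tV \<Delta>V \<epsilon>V"
    and mor: "bialgebroid_morphism sU tU \<Delta>U \<epsilon>U sV tV \<Delta>V \<epsilon>V \<pi>"
    and surj: "surj \<pi>"
  defines "B \<equiv> left_hopf_kernel tU \<Delta>U sV \<pi>"
    and "act \<equiv> hact sU tU \<Delta>U"
  shows
    \<comment> \<open>(i) B is an A-subring of U with unit map sU, commuting with tU(A)\<close>
    "(1 \<in> B \<and> (\<forall>b\<in>B. \<forall>b'\<in>B. b + b' \<in> B \<and> b * b' \<in> B) \<and> (\<forall>b\<in>B. - b \<in> B)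
      \<and> (\<forall>a. sU a \<in> B) \<and> (\<forall>b\<in>B. \<forall>a. tU a * b = b * tU a))
   \<and>
    \<comment> \<open>(ii) well-definedness: independent of the representative of u_+ \<otimes> u_-, lands in B\<close>
    (\<forall>u xs ys. \<forall>b\<in>B. teqA tU sU (galois_map \<Delta>U xs) [(u, 1)]
        \<longrightarrow> teqA tU sU (galois_map \<Delta>U ys) [(u, 1)]
        \<longrightarrow> sum_list (map (\<lambda>(x, y). x * b * y) xs) = sum_list (map (\<lambda>(x, y). x * b * y) ys))
   \<and> (\<forall>u. \<forall>b\<in>B. act u b \<in> B)
    \<comment> \<open>k-bilinear, i.e. defined on U \<otimes>_k B\<close>
   \<and> (\<forall>u u'. \<forall>b\<in>B. act (u + u') b = act u b + act u' b)
   \<and> (\<forall>u. \<forall>b\<in>B. \<forall>b'\<in>B. act u (b + b') = act u b + act u b')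
   \<and> (\<forall>c u. \<forall>b\<in>B. act (sU (\<iota> c) * u) b = sU (\<iota> c) * act u b)
   \<and> (\<forall>c u. \<forall>b\<in>B. act u (sU (\<iota> c) * b) = sU (\<iota> c) * act u b)
    \<comment> \<open>descends to U \<otimes>_{A^e} B: (u \<blacktriangleleft> a) \<rightharpoonup> b = u \<rightharpoonup> (a \<triangleright> b), (a \<blacktriangleright> u) \<rightharpoonup> b = u \<rightharpoonup> (b \<blacktriangleleft> a)\<close>
   \<and> (\<forall>u a. \<forall>b\<in>B. act (u * sU a) b = act u (sU a * b))
   \<and> (\<forall>u a. \<forall>b\<in>B. act (u * tU a) b = act u (b * sU a))
   \<and> (\<forall>b\<in>B. act 1 b = b)
   \<and> (\<forall>u v. \<forall>b\<in>B. act (u * v) b = act u (act v b))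
   \<and> (\<forall>u. act u 1 = sU (\<epsilon>U u))
   \<and> (\<forall>u. \<forall>b\<in>B. \<forall>b'\<in>B.
        act u (b * b') = sum_list (map (\<lambda>(x1, x2). act x1 b * act x2 b') (\<Delta>U u)))"
proof -
  interpret K: hopf_kernel \<iota> sU tU \<Delta>U \<epsilon>U sV tV \<Delta>V \<epsilon>V \<pi>
    using HU HV mor by unfold_locales (auto simp: left_hopf_algebroid_def)
  have central: "b \<in> K.B \<Longrightarrow> b \<in> centralizer tU" for b
    using K.kernel_subset_centralizer by blast
  show ?thesis
    unfolding act_def B_def
  proof (intro conjI ballI allI impI)
    fix u xs ys b
    assume "b \<in> K.B" "teqA tU sU (galois_map \<Delta>U xs) [(u, 1)]" "teqA tU sU (galois_map \<Delta>U ys) [(u, 1)]"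
    then show "sum_list (map (\<lambda>(x, y). x * b * y) xs) = sum_list (map (\<lambda>(x, y). x * b * y) ys)"
      using K.sandwich_translates_eq[OF central, of b u xs ys] unfolding K.translates_def sandwich_def by blast
  next
    fix b a assume "b \<in> K.B"
    then show "tU a * b = b * tU a" using central unfolding centralizer_def by blast
  qed (assumption | rule central | rule K.one_in_kernel K.kernel_add K.kernel_mult K.kernel_uminus
      K.s_in_kernel K.hact_in_kernel K.hact_s_iota_right K.hact_add_left K.hact_add_right K.hact_s_left
      K.hact_s_right K.hact_t_right K.hact_one_left K.hact_mult K.hact_one_right K.hact_mult_right)+
qed

end
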